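(* In any execution of the algorithm described in the context in which some non-faulty process decides, let $r$ be the smallest round in which a non-faulty process decides. Then every non-faulty process decides in either round $r$ or round $r+2$.
   Context: Model. There are $n$ processes $p_1,\dots,p_n$ ($i$ is the index of $p_i$) communicating over an asynchronous, reliable, point-to-point network: every pair of processes is connected by a channel, message delays are finite but unbounded, and the network does not lose, duplicate, modify or create messages. "Broadcast" means sending the message to every process (including oneself). Messages are signed with unforgeable digital signatures ($\langle m\rangle_j$ denotes message $m$ signed by $p_j$); malformed messages or messages with invalid signatures are ignored. Up to $t$ processes are Byzantine (faulty) and may behave arbitrarily and collude, but cannot forge signatures of other processes; the remaining processes are non-faulty and follow the algorithm. It is assumed that $t<n/3$. Algorithm. Messages are of the form $\mathrm{AUX}[r](v)$ with round $r\in\mathbb{N}$ and $v\in\{0,1\}$, sent as a pair $(\langle \mathrm{AUX}[r](v)\rangle_j,\mathit{proofs})$ where $\mathit{proofs}$ is a set of signed AUX messages. The predicate $\mathsf{is\_valid}(r,est,\mathit{proofs})$ is: if $r=0$ return true; if $r=1$ return true iff $\mathit{proofs}$ contains signed $\mathrm{AUX}[0](est)$ messages from $t+1$ different processes; otherwise let $b=(r-1)\bmod 2$; if $est=b$, return true iff ($r=2$ and $\mathit{proofs}$ contains signed $\mathrm{AUX}[0](b)$ from $t+1$ different processes) or ($\mathit{proofs}$ contains signed $\mathrm{AUX}[r-2](b)$ from $n-t$ different processes); if $est\neq b$, return true iff $\mathit{proofs}$ contains signed $\mathrm{AUX}[r-1](\neg b)$ from $n-t$ different processes. Each process $p_i$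 with proposal $v_i$ keeps a round counter $r_i$, a set $\mathit{aux\_values}_i$ of signed AUX messages, and timers indexed by naturals (timers $2r$ and $2r+1$ belong to round $r$; starting an already started or expired timer does nothing). It sets $r_i:=0$, $\mathit{aux\_values}_i:=\emptyset$, broadcasts $(\langle\mathrm{AUX}[0](v_i)\rangle_i,\emptyset)$, then repeats forever: (1) $r_i:=r_i+1$; (2) if $i=r_i\bmod n$ (coordinator), run Broadcast; (3) start timer $2r_i$ and wait until it expires; (4) if $i\ne r_i\bmod n$, run Broadcast; (5) wait until $\mathit{aux\_values}_i$ contains round-$r_i$ AUX messages from $n-t$ different processes; (6) start timer $2r_i+1$ and wait until it expires; (7) with $b_i=r_i\bmod 2$, if $\mathit{aux\_values}_i$ contains $\mathrm{AUX}[r_i](b_i)$ from $n-t$ different processes, decide $b_i$ (if not yet decided); a process decides in round $r$ if it decides at this step with $r_i=r$. Broadcast: let $\mathit{values}_i$ be the set of $v\in\{0,1\}$ such that $\mathsf{is\_valid}(r_i,v,S)$ holds for some $S\subseteq\mathit{aux\_values}_i$; let $bv=(r_i+1)\bmod 2$; if $p_i$ received from $p_{r_i\bmod n}$ a message $(\langle\mathrm{AUX}[r_i](p)\rangle_{r_i\bmod n},\cdot)$ with $p\in\mathit{values}_i$ then $est_i:=p$, else if $bv\in\mathit{values}_i$ then $est_i:=bv$, else $est_i:=\neg bv$; choose $\mathit{proofs}\subseteq\mathit{aux\_values}_i$ with $\mathsf{is\_valid}(r_i,est_i,\mathit{proofs})$ and broadcast $(\langle\mathrm{AUX}[r_i](est_i)\rangle_i,\mathit{proofs})$.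 On receiving $(\langle\mathrm{AUX}[r_j](est_j)\rangle_j,\mathit{proofs})$: if $\mathsf{is\_valid}(r_j,est_j,\mathit{proofs})$, add the signed message and the messages of $\mathit{proofs}$ needed to satisfy the predicate to $\mathit{aux\_values}_i$ (such messages are called valid). Then let $\rho_i$ be the largest round for which $\mathit{aux\_values}_i$ contains messages from $t+1$ different processes, and set every timer with index $\le 2\rho_i$ to expired. *)

theory Defs
  imports Main
begin

text \<open>Binary values are the naturals 0 and 1.
  Processes are identified with the indices 0..n-1 (so that the coordinator of round r is
  the process with index r mod n).\<close>
datatype signed = AUX (signer: nat) (rnd: nat) (vl: nat)

text \<open>A message on the wire: the signed AUX message together with its set of proofs.\<close>
type_synonym msg = "signed \<times> signed set"

text \<open>A packet in transit: (unique tag, sender, destination, message).\<close>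
type_synonym packet = "nat \<times> nat \<times> nat \<times> msg"

definition pdst :: "packet \<Rightarrow> nat" where "pdst pk = fst (snd (snd pk))"

definition signers :: "signed set \<Rightarrow> nat \<Rightarrow> nat \<Rightarrow> nat set" where
  "signers S r v = {j. AUX j r v \<in> S}"

definition rsigners :: "signed set \<Rightarrow> nat \<Rightarrow> nat set" where
  "rsigners S r = {j. \<exists>v. AUX j r v \<in> S}"

definition is_valid :: "nat \<Rightarrow> nat \<Rightarrow> nat \<Rightarrow> nat \<Rightarrow> signed set \<Rightarrow> bool" where
  "is_valid n t r est proofs =
    (if r = 0 then True
     else if r = 1 then card (signers proofs 0 est) \<ge> t + 1
     else (let b = (r - 1) mod 2 in
       if est = b then
         (r = 2 \<and> card (signers proofs 0 b) \<ge> t + 1) \<or> card (signers proofs (r - 2) b) \<ge> n - t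
       else card (signers proofs (r - 1) (1 - b)) \<ge> n - t))"

text \<open>The messages of proofs needed to satisfy the predicate (those of the kind the
  predicate counts).\<close>
definition needed :: "nat \<Rightarrow> nat \<Rightarrow> signed set \<Rightarrow> signed set" where
  "needed r est proofs =
    (if r = 0 then {}
     else if r = 1 then {m \<in> proofs. rnd m = 0 \<and> vl m = est}
     else if est = (r - 1) mod 2 then {m \<in> proofs. rnd m = r - 2 \<and> vl m = est}
     else {m \<in> proofs. rnd m = r - 1 \<and> vl m = est})"

definition wf_signed :: "nat \<Rightarrow> signed \<Rightarrow> bool" where
  "wf_signed n m = (signer m < n \<and> vl m \<le> 1)"

datatype pcv = PStart | PWait1 | PWait2 | PWait3
datatype tstate = Idle | Running | Expired

record lstate =
  pc :: pcv
  rd :: nat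
  auxv :: "signed set"
  rcvd :: "(nat \<times> signed) set"   \<comment> \<open>(sender, signed part) of every received message\<close>
  tmr :: "nat \<Rightarrow> tstate"
  decided :: "nat option"          \<comment> \<open>Some r iff the process decided in round r\<close>

record gstate =
  loc :: "nat \<Rightarrow> lstate"
  net :: "packet set"
  sigs :: "signed set"             \<comment> \<open>all AUX messages signed so far by non-faulty processes\<close>

definition start_timer :: "nat \<Rightarrow> (nat \<Rightarrow> tstate) \<Rightarrow> nat \<Rightarrow> tstate" where
  "start_timer j tm = (if tm j = Idle then tm(j := Running) else tm)"

definition valid_vals :: "nat \<Rightarrow> nat \<Rightarrow> nat \<Rightarrow> signed set \<Rightarrow> nat set" where
  "valid_vals n t r S = {v. v \<le> 1 \<and> (\<exists>S'\<subseteq>S. finite S' \<and> is_valid n t r v S')}"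

text \<open>Admissible choices (est, proofs) of procedure Broadcast in round r.\<close>
definition bcast_ok :: "nat \<Rightarrow> nat \<Rightarrow> nat \<Rightarrow> lstate \<Rightarrow> nat \<Rightarrow> signed set \<Rightarrow> bool" where
  "bcast_ok n t r l est ps =
    (let vals = valid_vals n t r (auxv l); c = r mod n; bv = (r + 1) mod 2 in
      (if \<exists>p\<in>vals. (c, AUX c r p) \<in> rcvd l
       then est \<in> vals \<and> (c, AUX c r est) \<in> rcvd l
       else if bv \<in> vals then est = bv else est = 1 - bv)
      \<and> ps \<subseteq> auxv l \<and> finite ps \<and> is_valid n t r est ps)"

definition upd_loc :: "gstate \<Rightarrow> nat \<Rightarrow> lstate \<Rightarrow> gstate" where
  "upd_loc s i l = s\<lparr>loc := (loc s)(i := l)\<rparr>"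

definition send_bcast :: "nat \<Rightarrow> nat \<Rightarrow> nat \<Rightarrow> nat \<Rightarrow> nat \<Rightarrow> signed set \<Rightarrow> gstate \<Rightarrow> gstate" where
  "send_bcast n k i r est ps s =
     s\<lparr>net := net s \<union> {(Suc k, i, d, (AUX i r est, ps)) | d. d < n},
       sigs := insert (AUX i r est) (sigs s)\<rparr>"

definition local_step :: "nat \<Rightarrow> nat \<Rightarrow> nat \<Rightarrow> nat \<Rightarrow> gstate \<Rightarrow> gstate \<Rightarrow> bool" where
  "local_step n t k i s s' =
    (let l = loc s i; r = rd l in
     (pc l = PStart \<and>
        (let r' = Suc r; l1 = l\<lparr>rd := r', tmr := start_timer (2 * r') (tmr l), pc := PWait1\<rparr> in
         if i = r' mod n
         then (\<exists>est ps. bcast_ok n t r' l est ps \<and> s' = send_bcast n k i r' est ps (upd_loc s i l1))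
         else s' = upd_loc s i l1))
   \<or> (pc l = PWait1 \<and> tmr l (2 * r) = Expired \<and>
        (let l1 = l\<lparr>pc := PWait2\<rparr> in
         if i \<noteq> r mod n
         then (\<exists>est ps. bcast_ok n t r l est ps \<and> s' = send_bcast n k i r est ps (upd_loc s i l1))
         else s' = upd_loc s i l1))
   \<or> (pc l = PWait2 \<and> card (rsigners (auxv l) r) \<ge> n - t \<and>
        s' = upd_loc s i (l\<lparr>tmr := start_timer (2 * r + 1) (tmr l), pc := PWait3\<rparr>))
   \<or> (pc l = PWait3 \<and> tmr l (2 * r + 1) = Expired \<and>
        s' = upd_loc s i (l\<lparr>decided := (if card (signers (auxv l) r (r mod 2)) \<ge> n - t \<and> decided l = None
                                          then Some r else decided l),
                             pc := PStart\<rparr>)))"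

definition receive :: "nat \<Rightarrow> nat \<Rightarrow> packet \<Rightarrow> lstate \<Rightarrow> lstate" where
  "receive n t pk l =
    (case pk of (tg, src, d, (m, ps)) \<Rightarrow>
      (let A' = (if is_valid n t (rnd m) (vl m) ps then auxv l \<union> {m} \<union> needed (rnd m) (vl m) ps
                 else auxv l) in
       l\<lparr>rcvd := insert (src, m) (rcvd l), auxv := A',
         tmr := (\<lambda>j. if \<exists>\<rho>. j \<le> 2 * \<rho> \<and> card (rsigners A' \<rho>) \<ge> t + 1 then Expired else tmr l j)\<rparr>))"

datatype action =
    Local nat
  | Deliver packet
  | Expire nat nat
  | ByzSend nat nat signed "signed set"
  | Skip

text \<open>Transition relation; F is the set of faulty processes, k is the global time.\<close>
definition step :: "nat \<Rightarrow> nat \<Rightarrow> nat set \<Rightarrow> nat \<Rightarrow> action \<Rightarrow> gstate \<Rightarrow> gstate \<Rightarrow> bool" where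
  "step n t F k a s s' =
    (case a of
       Local i \<Rightarrow> i < n \<and> i \<notin> F \<and> local_step n t k i s s'
     | Deliver pk \<Rightarrow> pk \<in> net s \<and>
         (if pdst pk \<notin> F
          then s' = s\<lparr>loc := (loc s)(pdst pk := receive n t pk (loc s (pdst pk))), net := net s - {pk}\<rparr>
          else s' = s\<lparr>net := net s - {pk}\<rparr>)
     | Expire i j \<Rightarrow> i < n \<and> i \<notin> F \<and> tmr (loc s i) j = Running \<and>
         s' = upd_loc s i ((loc s i)\<lparr>tmr := (tmr (loc s i))(j := Expired)\<rparr>)
     | ByzSend j d m ps \<Rightarrow> j \<in> F \<and> d < n \<and> finite ps \<and>
         (\<forall>x \<in> insert m ps. wf_signed n x \<and> (signer x \<notin> F \<longrightarrow> x \<in> sigs s)) \<and>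
         s' = s\<lparr>net := insert (Suc k, j, d, (m, ps)) (net s)\<rparr>
     | Skip \<Rightarrow> s' = s)"

text \<open>Initial configuration: every non-faulty process i has broadcast AUX[0](v i) with empty proofs.\<close>
definition init :: "nat \<Rightarrow> nat set \<Rightarrow> (nat \<Rightarrow> nat) \<Rightarrow> gstate" where
  "init n F v =
    \<lparr>loc = (\<lambda>i. \<lparr>pc = PStart, rd = 0, auxv = {}, rcvd = {}, tmr = (\<lambda>_. Idle), decided = None\<rparr>),
     net = {(0, i, d, (AUX i 0 (v i), {})) | i d. i < n \<and> i \<notin> F \<and> d < n},
     sigs = {AUX i 0 (v i) | i. i < n \<and> i \<notin> F}\<rparr>"

definition fair_execution ::
  "nat \<Rightarrow> nat \<Rightarrow> nat set \<Rightarrow> (nat \<Rightarrow> nat) \<Rightarrow> (nat \<Rightarrow> gstate) \<Rightarrow> (nat \<Rightarrow> action) \<Rightarrow> bool" where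
  "fair_execution n t F v s a =
    (s 0 = init n F v
     \<and> (\<forall>k. step n t F k (a k) (s k) (s (Suc k)))
     \<and> (\<forall>k pk. pk \<in> net (s k) \<and> pdst pk \<notin> F \<longrightarrow> (\<exists>k'\<ge>k. pk \<notin> net (s k')))
     \<and> (\<forall>k i j. i < n \<and> i \<notin> F \<and> tmr (loc (s k) i) j = Running \<longrightarrow>
                 (\<exists>k'\<ge>k. tmr (loc (s k') i) j = Expired))
     \<and> (\<forall>k i. i < n \<and> i \<notin> F \<and> (\<exists>s'. local_step n t k i (s k) s') \<longrightarrow>
                 (\<exists>k'\<ge>k. a k' = Local i)))"

end

theory Submission
  imports Defs
begin

text \<open>Let a correct process decide \<open>b = r mod 2\<close> in round \<open>r\<close>: then \<open>n - t\<close> processes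
  signed \<open>AUX[r](b)\<close>. Any \<open>n - t\<close> signatures on \<open>AUX[r](1 - b)\<close> would share a correct
  signer with them (\<open>n > 3t\<close>), and a correct process signs one value per round. The rules of
  \<open>is_valid\<close> make every valid \<open>AUX[r+1](1 - b)\<close> or \<open>AUX[r+2](1 - b)\<close> depend on such a set
  of signatures, so none exists. Hence nobody decides in round \<open>r + 1\<close>, and all round-\<open>r+2\<close>
  messages a correct process holds carry \<open>b\<close>.

  By fairness every correct process completes every round: once the round-\<open>\<rho>\<close> messages
  of all correct processes are delivered, Broadcast of round \<open>\<rho> + 1\<close> has a valid value, and
  \<open>n - t\<close> round messages arrive. At the end of round \<open>r + 2\<close> a correct process therefore
  holds \<open>n - t\<close> messages \<open>AUX[r+2](b)\<close> and decides, unless it already decided in round \<open>r\<close>.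

  These arguments rest on an invariant of reachable states: whatever correct processes store or
  forward is well-formed, carries only genuine signatures of correct processes, is justified by
  valid proofs, and is eventually delivered.\<close>

lemma binary_flip: "x \<le> 1 \<Longrightarrow> b \<le> 1 \<Longrightarrow> x \<noteq> b \<Longrightarrow> 1 - b = (x::nat)"
  by arith

lemma quorums_intersect_outside:
  fixes A B F :: "nat set"
  assumes "3 * t < n" "finite F" "card F \<le> t" "A \<subseteq> {..<n}" "B \<subseteq> {..<n}" "n - t \<le> card A" "n - t \<le> card B"
  shows "\<exists>j\<in>A \<inter> B. j \<notin> F"
proof (rule ccontr)
  assume "\<not> ?thesis"
  then have "A \<inter> B \<subseteq> F" by blast
  then have "card (A \<inter> B) \<le> card F" by (rule card_mono[OF assms(2)])
  moreover have "card (A \<union> B) \<le> card {..<n}" using assms(4,5) by (intro card_mono) auto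
  moreover have "card A + card B = card (A \<union> B) + card (A \<inter> B)"
    using finite_subset[OF assms(4) finite_lessThan] finite_subset[OF assms(5) finite_lessThan]
    by (rule card_Un_Int)
  ultimately show False using assms(1,3,6,7) by simp
qed

lemma quorum_member_outside:
  assumes "3 * t < n" "finite F" "card F \<le> t" "n - t \<le> card A"
  shows "\<exists>j\<in>A. j \<notin> F"
proof (rule ccontr)
  assume "\<not> ?thesis"
  then have "A \<subseteq> F" by blast
  then have "card A \<le> card F" by (rule card_mono[OF assms(2)])
  then show False using assms by linarith
qed

lemma finite_eventually_all:
  fixes P :: "'a \<Rightarrow> nat \<Rightarrow> bool"
  assumes "finite J" "\<forall>j\<in>J. \<exists>k. P j k" "\<And>j k k'. P j k \<Longrightarrow> k \<le> k' \<Longrightarrow> P j k'"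
  shows "\<exists>K. \<forall>j\<in>J. P j K"
  using assms(1,2)
proof (induction J rule: finite_induct)
  case (insert x J)
  then obtain K k where K: "\<forall>j\<in>J. P j K" and k: "P x k" by blast
  have "P j (max K k)" if "j \<in> insert x J" for j
    using that assms(3)[OF k max.cobounded2] assms(3)[OF _ max.cobounded1] K by auto
  then show ?case by blast
qed simp

lemma nat_crossing:
  fixes f :: "nat \<Rightarrow> nat"
  assumes "f 0 \<le> P" "P < f k"
  shows "\<exists>j<k. f j \<le> P \<and> P < f (Suc j)"
  using assms(2)
proof (induction k)
  case (Suc k)
  show ?case
  proof (cases "P < f k")
    case True
    then show ?thesis using Suc.IH less_SucI by blast
  next
    case False
    then show ?thesis using Suc.prems by (intro exI[of _ k]) auto
  qed
qed (use assms(1) in simp)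

lemma binary_majority:
  fixes x :: "'a \<Rightarrow> nat"
  assumes "\<forall>j\<in>J. x j \<le> 1" "2 * t + 1 \<le> card J"
  shows "\<exists>w\<le>1. t + 1 \<le> card {j\<in>J. x j = w}"
proof (rule ccontr)
  assume "\<not> ?thesis"
  then have "card {j\<in>J. x j = 0} \<le> t" "card {j\<in>J. x j = 1} \<le> t" by auto
  moreover have "J = {j\<in>J. x j = 0} \<union> {j\<in>J. x j = 1}"
    using assms(1) by (auto simp: le_Suc_eq)
  then have "card J = card ({j\<in>J. x j = 0} \<union> {j\<in>J. x j = 1})" by (rule arg_cong)
  then have "card J \<le> card {j\<in>J. x j = 0} + card {j\<in>J. x j = 1}"
    using card_Un_le by (rule ord_eq_le_trans)
  ultimately show False using assms(2) by linarith
qed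

lemma needed_subset: "needed r est ps \<subseteq> ps"
  unfolding needed_def by auto

lemma valid_valsI: "S \<subseteq> A \<Longrightarrow> finite S \<Longrightarrow> is_valid n t r w S \<Longrightarrow> w \<le> 1 \<Longrightarrow> w \<in> valid_vals n t r A"
  unfolding valid_vals_def by blast

lemma valid_vals_mono: "A \<subseteq> B \<Longrightarrow> valid_vals n t r A \<subseteq> valid_vals n t r B"
  unfolding valid_vals_def by blast

lemma signers_image [simp]: "signers ((\<lambda>j. AUX j r w) ` J) r w = J"
  unfolding signers_def by auto

lemma is_valid_Suc_of_quorum:
  assumes "1 \<le> \<rho>" "n - t \<le> card (signers S \<rho> (Suc \<rho> mod 2))"
  shows "is_valid n t (Suc \<rho>) (Suc \<rho> mod 2) S"
  using assms by (auto simp: is_valid_def Let_def mod_Suc)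

lemma is_valid_Suc_needed:
  assumes "1 \<le> \<rho>" "is_valid n t \<rho> (\<rho> mod 2) ps"
  shows "is_valid n t (Suc \<rho>) (\<rho> mod 2) (needed \<rho> (\<rho> mod 2) ps)"
proof -
  obtain q where q: "\<rho> = Suc q" using assms(1) by (cases \<rho>) auto
  have parity: "Suc q mod 2 = 1 - q mod 2" "Suc q mod 2 \<noteq> q mod 2" by presburger+
  have S: "signers (needed \<rho> (\<rho> mod 2) ps) q (\<rho> mod 2) = signers ps q (\<rho> mod 2)"
    unfolding q using parity(2) by (auto simp: needed_def signers_def)
  show ?thesis
  proof (cases "q = 0")
    case True
    then show ?thesis using assms(2) S unfolding q by (simp add: is_valid_def)
  next
    case False
    then have "n - t \<le> card (signers ps q (Suc q mod 2))"
      using assms(2) parity unfolding q is_valid_def Let_def by simp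
    then show ?thesis using S False parity unfolding q is_valid_def Let_def by simp
  qed
qed

lemma needed_quorum:
  assumes "is_valid n t \<rho> x ps" "m \<in> needed \<rho> x ps" "vl m \<le> 1" "1 \<le> rnd m"
  shows "n - t \<le> card (signers ps (rnd m) (vl m))"
proof -
  have "2 \<le> \<rho>" "vl m = x" using assms(2,4) by (auto simp: needed_def split: if_splits)
  show ?thesis
  proof (cases "x = (\<rho> - 1) mod 2")
    case True
    then have "rnd m = \<rho> - 2" using assms(2) \<open>2 \<le> \<rho>\<close> by (auto simp: needed_def)
    then show ?thesis using assms(1,4) True \<open>vl m = x\<close> \<open>2 \<le> \<rho>\<close> by (auto simp: is_valid_def Let_def)
  next
    case False
    then have "rnd m = \<rho> - 1" using assms(2) \<open>2 \<le> \<rho>\<close> by (auto simp: needed_def)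
    moreover have "1 - (\<rho> - 1) mod 2 = x" using binary_flip assms(3) \<open>vl m = x\<close> False by simp
    ultimately show ?thesis using assms(1) False \<open>vl m = x\<close> \<open>2 \<le> \<rho>\<close> by (auto simp: is_valid_def Let_def)
  qed
qed

lemma valid_vals_Suc_nonempty:
  assumes "3 * t < n" "finite J" "n - t \<le> card J"
    and sent: "\<forall>j\<in>J. x j \<le> 1 \<and> finite (ps j) \<and> is_valid n t \<rho> (x j) (ps j)
                     \<and> insert (AUX j \<rho> (x j)) (needed \<rho> (x j) (ps j)) \<subseteq> A"
  shows "valid_vals n t (Suc \<rho>) A \<noteq> {}"
proof (cases "\<rho> = 0")
  case True
  have "2 * t + 1 \<le> card J" using assms(1,3) by linarith
  then obtain w where w: "w \<le> 1" "t + 1 \<le> card {j\<in>J. x j = w}"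
    using binary_majority[of J x] sent by blast
  let ?S = "(\<lambda>j. AUX j 0 w) ` {j\<in>J. x j = w}"
  have "?S \<subseteq> A" using sent True by auto
  moreover have "finite ?S" using assms(2) by simp
  moreover have "is_valid n t (Suc \<rho>) w ?S" using w True by (simp add: is_valid_def)
  ultimately have "w \<in> valid_vals n t (Suc \<rho>) A" using valid_valsI[of ?S A n t "Suc \<rho>" w] w(1) by blast
  then show ?thesis by blast
next
  case \<rho>_pos: False
  show ?thesis
  proof (cases "\<forall>j\<in>J. x j = Suc \<rho> mod 2")
    case True
    let ?S = "(\<lambda>j. AUX j \<rho> (Suc \<rho> mod 2)) ` J"
    have "?S \<subseteq> A" using sent True by auto
    moreover have "finite ?S" using assms(2) by simp
    moreover have "is_valid n t (Suc \<rho>) (Suc \<rho> mod 2) ?S"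
      using \<rho>_pos assms(3) by (intro is_valid_Suc_of_quorum) auto
    ultimately have "Suc \<rho> mod 2 \<in> valid_vals n t (Suc \<rho>) A" by (intro valid_valsI[of ?S]) auto
    then show ?thesis by blast
  next
    case False
    then obtain j where j: "j \<in> J" "x j \<noteq> Suc \<rho> mod 2" by blast
    have "x j \<le> 1" "finite (ps j)" "is_valid n t \<rho> (x j) (ps j)"
      "needed \<rho> (x j) (ps j) \<subseteq> A"
      using sent j(1) by auto
    moreover have "x j = \<rho> mod 2" using j(2) \<open>x j \<le> 1\<close> by presburger
    ultimately have "is_valid n t (Suc \<rho>) (x j) (needed \<rho> (x j) (ps j))"
      using \<rho>_pos is_valid_Suc_needed by simp
    moreover have "finite (needed \<rho> (x j) (ps j))"
      using \<open>finite (ps j)\<close> finite_subset[OF needed_subset] by blast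
    ultimately have "x j \<in> valid_vals n t (Suc \<rho>) A"
      using valid_valsI[of "needed \<rho> (x j) (ps j)" A n t "Suc \<rho>" "x j"] \<open>x j \<le> 1\<close>
        \<open>needed \<rho> (x j) (ps j) \<subseteq> A\<close> by blast
    then show ?thesis by blast
  qed
qed

definition authentic :: "nat \<Rightarrow> nat set \<Rightarrow> signed set \<Rightarrow> signed set \<Rightarrow> bool" where
  "authentic n F SG X \<longleftrightarrow> (\<forall>m\<in>X. wf_signed n m \<and> (signer m \<notin> F \<longrightarrow> m \<in> SG))"

definition authentic_packet :: "nat \<Rightarrow> nat set \<Rightarrow> signed set \<Rightarrow> packet \<Rightarrow> bool" where
  "authentic_packet n F SG pk = (case pk of (tg, src, d, m, ps) \<Rightarrow> authentic n F SG (insert m ps))"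

definition justified :: "nat \<Rightarrow> nat \<Rightarrow> nat set \<Rightarrow> signed set \<Rightarrow> signed \<Rightarrow> bool" where
  "justified n t F SG m \<longleftrightarrow>
     (\<exists>j \<rho> x ps. is_valid n t \<rho> x ps \<and> authentic n F SG ps \<and> m \<in> insert (AUX j \<rho> x) (needed \<rho> x ps))"

definition reliably_sent :: "nat \<Rightarrow> nat \<Rightarrow> nat set \<Rightarrow> gstate \<Rightarrow> nat \<Rightarrow> nat \<Rightarrow> nat \<Rightarrow> bool" where
  "reliably_sent n t F s j \<rho> x \<longleftrightarrow> \<rho> \<le> rd (loc s j) \<and>
     (\<exists>tg ps. finite ps \<and> is_valid n t \<rho> x ps \<and> authentic n F (sigs s) ps \<and>
       (\<forall>d<n. d \<notin> F \<longrightarrow> (tg, j, d, (AUX j \<rho> x, ps)) \<in> net s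
                          \<or> insert (AUX j \<rho> x) (needed \<rho> x ps) \<subseteq> auxv (loc s d)))"

definition proc_inv :: "nat \<Rightarrow> nat \<Rightarrow> nat set \<Rightarrow> signed set \<Rightarrow> nat \<Rightarrow> lstate \<Rightarrow> bool" where
  "proc_inv n t F SG i l \<longleftrightarrow>
     authentic n F SG (auxv l) \<and> (\<forall>m\<in>auxv l. justified n t F SG m)
   \<and> (pc l = PWait1 \<longrightarrow> i \<noteq> rd l mod n \<longrightarrow> (\<forall>x. AUX i (rd l) x \<notin> SG))
   \<and> (pc l \<noteq> PStart \<longrightarrow> 1 \<le> rd l \<and> tmr l (2 * rd l) \<noteq> Idle)
   \<and> (pc l = PWait3 \<longrightarrow> tmr l (2 * rd l + 1) \<noteq> Idle \<and> n - t \<le> card (rsigners (auxv l) (rd l)))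
   \<and> (\<forall>\<rho>. decided l = Some \<rho> \<longrightarrow> 1 \<le> \<rho> \<and> \<rho> \<le> rd l \<and> n - t \<le> card (signers (auxv l) \<rho> (\<rho> mod 2)))
   \<and> (\<forall>\<rho><rd l. \<exists>x. AUX i \<rho> x \<in> SG)
   \<and> ((pc l \<noteq> PWait1 \<or> i = rd l mod n) \<longrightarrow> (\<exists>x. AUX i (rd l) x \<in> SG))"

definition exec_inv :: "nat \<Rightarrow> nat \<Rightarrow> nat set \<Rightarrow> gstate \<Rightarrow> bool" where
  "exec_inv n t F s \<longleftrightarrow>
     (\<forall>pk\<in>net s. authentic_packet n F (sigs s) pk)
   \<and> (\<forall>m\<in>sigs s. signer m \<notin> F \<and> wf_signed n m)
   \<and> (\<forall>j \<rho> x. AUX j \<rho> x \<in> sigs s \<longrightarrow> reliably_sent n t F s j \<rho> x)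
   \<and> (\<forall>j \<rho> x y. AUX j \<rho> x \<in> sigs s \<longrightarrow> AUX j \<rho> y \<in> sigs s \<longrightarrow> x = y)
   \<and> (\<forall>i<n. i \<notin> F \<longrightarrow> proc_inv n t F (sigs s) i (loc s i))"

lemma exec_invD:
  assumes "exec_inv n t F s"
  shows "\<And>pk. pk \<in> net s \<Longrightarrow> authentic_packet n F (sigs s) pk"
    "\<And>m. m \<in> sigs s \<Longrightarrow> signer m \<notin> F \<and> wf_signed n m"
    "\<And>j \<rho> x. AUX j \<rho> x \<in> sigs s \<Longrightarrow> reliably_sent n t F s j \<rho> x"
    "\<And>j \<rho> x y. AUX j \<rho> x \<in> sigs s \<Longrightarrow> AUX j \<rho> y \<in> sigs s \<Longrightarrow> x = y"
    "\<And>i. i < n \<Longrightarrow> i \<notin> F \<Longrightarrow> proc_inv n t F (sigs s) i (loc s i)"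
  using assms unfolding exec_inv_def by blast+

lemma authentic_mono: "authentic n F A X \<Longrightarrow> A \<subseteq> B \<Longrightarrow> authentic n F B X"
  unfolding authentic_def by blast

lemma authentic_subset: "authentic n F A X \<Longrightarrow> Y \<subseteq> X \<Longrightarrow> authentic n F A Y"
  unfolding authentic_def by blast

lemma authentic_packet_mono: "authentic_packet n F A pk \<Longrightarrow> A \<subseteq> B \<Longrightarrow> authentic_packet n F B pk"
  unfolding authentic_packet_def using authentic_mono by (cases pk) auto

lemma justified_mono: "justified n t F A m \<Longrightarrow> A \<subseteq> B \<Longrightarrow> justified n t F B m"
  unfolding justified_def using authentic_mono by blast

lemma signers_subset_lessThan: "authentic n F A X \<Longrightarrow> signers X r v \<subseteq> {..<n}"
  unfolding authentic_def signers_def wf_signed_def by force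

lemma rsigners_subset_lessThan: "authentic n F A X \<Longrightarrow> rsigners X r \<subseteq> {..<n}"
  unfolding authentic_def rsigners_def wf_signed_def by force

lemma finite_signers: "authentic n F A X \<Longrightarrow> finite (signers X r v)"
  by (meson finite_lessThan finite_subset signers_subset_lessThan)

lemma finite_rsigners: "authentic n F A X \<Longrightarrow> finite (rsigners X r)"
  by (meson finite_lessThan finite_subset rsigners_subset_lessThan)

lemma card_signers_mono:
  "authentic n F A Y \<Longrightarrow> X \<subseteq> Y \<Longrightarrow> card (signers X r v) \<le> card (signers Y r v)"
  by (rule card_mono[OF finite_signers]) (auto simp: signers_def)

lemma card_rsigners_mono:
  "authentic n F A Y \<Longrightarrow> X \<subseteq> Y \<Longrightarrow> card (rsigners X r) \<le> card (rsigners Y r)"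
  by (rule card_mono[OF finite_rsigners]) (auto simp: rsigners_def)

lemma upd_loc_simps [simp]:
  "loc (upd_loc s i l) = (loc s)(i := l)" "net (upd_loc s i l) = net s" "sigs (upd_loc s i l) = sigs s"
  unfolding upd_loc_def by auto

lemma send_bcast_simps [simp]:
  "loc (send_bcast n k i r est ps s) = loc s"
  "net (send_bcast n k i r est ps s) = net s \<union> {(Suc k, i, d, (AUX i r est, ps)) | d. d < n}"
  "sigs (send_bcast n k i r est ps s) = insert (AUX i r est) (sigs s)"
  unfolding send_bcast_def by auto

lemma start_timer_started [simp]: "start_timer j tm j \<noteq> Idle"
  unfolding start_timer_def by auto

lemma start_timer_other [simp]: "j' \<noteq> j \<Longrightarrow> start_timer j tm j' = tm j'"
  unfolding start_timer_def by auto

lemma receive_simps: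
  "rd (receive n t pk l) = rd l" "pc (receive n t pk l) = pc l" "decided (receive n t pk l) = decided l"
  "auxv (receive n t (tg, src, d, m, ps) l) =
     (if is_valid n t (rnd m) (vl m) ps then auxv l \<union> {m} \<union> needed (rnd m) (vl m) ps else auxv l)"
  unfolding receive_def by (cases pk; auto simp: Let_def)+

lemma receive_tmr:
  "tmr l j \<noteq> Idle \<Longrightarrow> tmr (receive n t pk l) j \<noteq> Idle"
  "tmr l j = Expired \<Longrightarrow> tmr (receive n t pk l) j = Expired"
  unfolding receive_def by (cases pk; auto simp: Let_def)+

lemma receive_auxv_mono: "auxv l \<subseteq> auxv (receive n t pk l)"
  by (cases pk) (auto simp: receive_simps)

lemma bcast_okD:
  assumes "bcast_ok n t r l est ps"
  shows "ps \<subseteq> auxv l" "finite ps" "is_valid n t r est ps" "est \<le> 1"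
  using assms unfolding bcast_ok_def Let_def valid_vals_def by (auto split: if_splits)

lemma local_step_cases:
  assumes "local_step n t k i s s'"
  defines "l \<equiv> loc s i"
  obtains
    (start_coord) est ps where "pc l = PStart" "i = Suc (rd l) mod n"
      "bcast_ok n t (Suc (rd l)) l est ps"
      "s' = send_bcast n k i (Suc (rd l)) est ps
              (upd_loc s i (l\<lparr>rd := Suc (rd l), tmr := start_timer (2 * Suc (rd l)) (tmr l), pc := PWait1\<rparr>))"
  | (start) "pc l = PStart" "i \<noteq> Suc (rd l) mod n"
      "s' = upd_loc s i (l\<lparr>rd := Suc (rd l), tmr := start_timer (2 * Suc (rd l)) (tmr l), pc := PWait1\<rparr>)"
  | (wait1) est ps where "pc l = PWait1" "tmr l (2 * rd l) = Expired" "i \<noteq> rd l mod n"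
      "bcast_ok n t (rd l) l est ps"
      "s' = send_bcast n k i (rd l) est ps (upd_loc s i (l\<lparr>pc := PWait2\<rparr>))"
  | (wait1_coord) "pc l = PWait1" "tmr l (2 * rd l) = Expired" "i = rd l mod n"
      "s' = upd_loc s i (l\<lparr>pc := PWait2\<rparr>)"
  | (wait2) "pc l = PWait2" "n - t \<le> card (rsigners (auxv l) (rd l))"
      "s' = upd_loc s i (l\<lparr>tmr := start_timer (2 * rd l + 1) (tmr l), pc := PWait3\<rparr>)"
  | (wait3) "pc l = PWait3" "tmr l (2 * rd l + 1) = Expired"
      "s' = upd_loc s i (l\<lparr>decided := (if n - t \<le> card (signers (auxv l) (rd l) (rd l mod 2)) \<and> decided l = None
                                         then Some (rd l) else decided l), pc := PStart\<rparr>)"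
  using assms(1) unfolding local_step_def Let_def l_def
  by (elim disjE conjE; auto split: if_splits intro: that)

lemma proc_inv_mono:
  assumes "proc_inv n t F A j l" "A \<subseteq> B" "\<forall>m\<in>B - A. signer m \<noteq> j"
  shows "proc_inv n t F B j l"
proof -
  have "AUX j (rd l) x \<in> A" if "AUX j (rd l) x \<in> B" for x
    using assms(3) that by force
  then show ?thesis
    using assms(1,2) authentic_mono justified_mono unfolding proc_inv_def by (smt (verit) subsetD)
qed

lemma proc_inv_start_round:
  assumes "proc_inv n t F SG i l" "pc l = PStart" "SG \<subseteq> SG'"
    "i \<noteq> Suc (rd l) mod n \<Longrightarrow> \<forall>x. AUX i (Suc (rd l)) x \<notin> SG'"
    "i = Suc (rd l) mod n \<Longrightarrow> \<exists>x. AUX i (Suc (rd l)) x \<in> SG'"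
  shows "proc_inv n t F SG' i (l\<lparr>rd := Suc (rd l), tmr := start_timer (2 * Suc (rd l)) (tmr l), pc := PWait1\<rparr>)"
proof -
  have inv: "authentic n F SG (auxv l)" "\<forall>m\<in>auxv l. justified n t F SG m"
    "\<forall>\<rho>. decided l = Some \<rho> \<longrightarrow> 1 \<le> \<rho> \<and> \<rho> \<le> rd l \<and> n - t \<le> card (signers (auxv l) \<rho> (\<rho> mod 2))"
    "\<forall>\<rho><rd l. \<exists>x. AUX i \<rho> x \<in> SG" "\<exists>x. AUX i (rd l) x \<in> SG"
    using assms(1,2) unfolding proc_inv_def by auto
  have "\<forall>\<rho><Suc (rd l). \<exists>x. AUX i \<rho> x \<in> SG'"
    using inv(4,5) assms(3) by (metis less_Suc_eq subsetD)
  moreover have "authentic n F SG' (auxv l)" "\<forall>m\<in>auxv l. justified n t F SG' m"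
    using authentic_mono[OF inv(1) assms(3)] justified_mono[OF _ assms(3)] inv(2) by blast+
  moreover have "\<forall>\<rho>. decided l = Some \<rho> \<longrightarrow> 1 \<le> \<rho> \<and> \<rho> \<le> Suc (rd l) \<and> n - t \<le> card (signers (auxv l) \<rho> (\<rho> mod 2))"
    using inv(3) le_SucI by blast
  ultimately show ?thesis
    using assms(4,5) unfolding proc_inv_def by simp
qed

lemma proc_inv_wait1:
  assumes "proc_inv n t F SG i l" "pc l = PWait1" "SG \<subseteq> SG'" "\<exists>x. AUX i (rd l) x \<in> SG'"
  shows "proc_inv n t F SG' i (l\<lparr>pc := PWait2\<rparr>)"
proof -
  have inv: "authentic n F SG (auxv l)" "\<forall>m\<in>auxv l. justified n t F SG m"
    "\<forall>\<rho>. decided l = Some \<rho> \<longrightarrow> 1 \<le> \<rho> \<and> \<rho> \<le> rd l \<and> n - t \<le> card (signers (auxv l) \<rho> (\<rho> mod 2))"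
    "\<forall>\<rho><rd l. \<exists>x. AUX i \<rho> x \<in> SG" "1 \<le> rd l \<and> tmr l (2 * rd l) \<noteq> Idle"
    using assms(1,2) unfolding proc_inv_def by auto
  have "authentic n F SG' (auxv l)" "\<forall>m\<in>auxv l. justified n t F SG' m" "\<forall>\<rho><rd l. \<exists>x. AUX i \<rho> x \<in> SG'"
    using authentic_mono[OF inv(1) assms(3)] justified_mono[OF _ assms(3)] inv(2,4) assms(3) by blast+
  then show ?thesis
    using inv(3,5) assms(4) unfolding proc_inv_def by simp
qed

lemma proc_inv_wait2:
  assumes "proc_inv n t F SG i l" "pc l = PWait2" "n - t \<le> card (rsigners (auxv l) (rd l))"
  shows "proc_inv n t F SG i (l\<lparr>tmr := start_timer (2 * rd l + 1) (tmr l), pc := PWait3\<rparr>)"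
  using assms unfolding proc_inv_def by auto

lemma proc_inv_wait3:
  assumes "proc_inv n t F SG i l" "pc l = PWait3"
  shows "proc_inv n t F SG i (l\<lparr>decided := (if n - t \<le> card (signers (auxv l) (rd l) (rd l mod 2)) \<and> decided l = None
                                                then Some (rd l) else decided l), pc := PStart\<rparr>)"
  using assms unfolding proc_inv_def by auto

lemma proc_inv_receive:
  assumes "proc_inv n t F SG i l" "authentic n F SG (insert m ps)"
  shows "proc_inv n t F SG i (receive n t (tg, src, d, m, ps) l)"
proof -
  let ?l = "receive n t (tg, src, d, m, ps) l"
  have "auxv ?l \<subseteq> auxv l \<union> insert m ps"
    using needed_subset by (auto simp: receive_simps)
  then have auth: "authentic n F SG (auxv ?l)"
    using assms unfolding proc_inv_def authentic_def by blast
  have just: "\<forall>x\<in>auxv ?l. justified n t F SG x"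
  proof
    fix x assume x: "x \<in> auxv ?l"
    show "justified n t F SG x"
    proof (cases "x \<in> auxv l")
      case True
      then show ?thesis using assms(1) unfolding proc_inv_def by blast
    next
      case False
      then have "is_valid n t (rnd m) (vl m) ps"
        "x \<in> insert (AUX (signer m) (rnd m) (vl m)) (needed (rnd m) (vl m) ps)"
        using x by (auto simp: receive_simps split: if_splits)
      moreover have "authentic n F SG ps" using assms(2) authentic_subset by blast
      ultimately show ?thesis unfolding justified_def by blast
    qed
  qed
  have more_rsigners: "card (rsigners (auxv l) r) \<le> card (rsigners (auxv ?l) r)" for r
    by (rule card_rsigners_mono[OF auth receive_auxv_mono])
  have more_signers: "card (signers (auxv l) r w) \<le> card (signers (auxv ?l) r w)" for r w
    by (rule card_signers_mono[OF auth receive_auxv_mono])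
  have timers: "tmr l j \<noteq> Idle \<Longrightarrow> tmr ?l j \<noteq> Idle" for j by (rule receive_tmr(1))
  show ?thesis
    unfolding proc_inv_def receive_simps(1,2,3)
  proof (intro conjI allI impI)
  qed (use assms(1) auth just more_rsigners more_signers timers in \<open>auto simp: proc_inv_def intro: le_trans\<close>)
qed

lemma reliably_sent_mono:
  assumes "reliably_sent n t F s j \<rho> x" "rd (loc s j) \<le> rd (loc s' j)" "sigs s \<subseteq> sigs s'" "net s \<subseteq> net s'"
    "\<And>d. d < n \<Longrightarrow> d \<notin> F \<Longrightarrow> auxv (loc s d) \<subseteq> auxv (loc s' d)"
  shows "reliably_sent n t F s' j \<rho> x"
proof -
  obtain tg ps where ps: "finite ps" "is_valid n t \<rho> x ps" "authentic n F (sigs s) ps"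
    and dest: "\<forall>d<n. d \<notin> F \<longrightarrow> (tg, j, d, (AUX j \<rho> x, ps)) \<in> net s
                                   \<or> insert (AUX j \<rho> x) (needed \<rho> x ps) \<subseteq> auxv (loc s d)"
    and \<rho>: "\<rho> \<le> rd (loc s j)"
    using assms(1) unfolding reliably_sent_def by blast
  have "\<forall>d<n. d \<notin> F \<longrightarrow> (tg, j, d, (AUX j \<rho> x, ps)) \<in> net s'
                         \<or> insert (AUX j \<rho> x) (needed \<rho> x ps) \<subseteq> auxv (loc s' d)"
    using dest assms(4,5) by blast
  moreover have "authentic n F (sigs s') ps" using authentic_mono[OF ps(3) assms(3)] .
  ultimately show ?thesis
    using ps(1,2) \<rho> assms(2) unfolding reliably_sent_def by (meson le_trans)
qed

lemma exec_inv_upd_loc: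
  assumes "exec_inv n t F s" "auxv (loc s i) \<subseteq> auxv l'" "rd (loc s i) \<le> rd l'"
    "i < n" "i \<notin> F" "proc_inv n t F (sigs s) i l'"
  shows "exec_inv n t F (upd_loc s i l')"
proof -
  have "reliably_sent n t F (upd_loc s i l') j \<rho> x" if "AUX j \<rho> x \<in> sigs s" for j \<rho> x
    by (rule reliably_sent_mono[OF exec_invD(3)[OF assms(1) that]]) (use assms(2,3) in auto)
  then show ?thesis using assms unfolding exec_inv_def by auto
qed

lemma authentic_packets_send_bcast:
  assumes "\<forall>pk\<in>net s. authentic_packet n F (sigs s) pk" "authentic n F (sigs s) ps" "i < n" "i \<notin> F" "est \<le> 1"
  shows "\<forall>pk\<in>net (send_bcast n k i r est ps s). authentic_packet n F (sigs (send_bcast n k i r est ps s)) pk"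
proof
  fix pk assume "pk \<in> net (send_bcast n k i r est ps s)"
  then consider "pk \<in> net s" | d where "pk = (Suc k, i, d, (AUX i r est, ps))" by auto
  then show "authentic_packet n F (sigs (send_bcast n k i r est ps s)) pk"
  proof cases
    case 1
    then show ?thesis using authentic_packet_mono[OF bspec[OF assms(1) 1] subset_insertI] by simp
  next
    case 2
    then show ?thesis using assms(2-5) unfolding authentic_packet_def authentic_def wf_signed_def by auto
  qed
qed

lemma exec_inv_send_bcast:
  assumes "exec_inv n t F s" "i < n" "i \<notin> F" "auxv (loc s i) \<subseteq> auxv l'" "rd (loc s i) \<le> rd l'" "r \<le> rd l'"
    "\<forall>x. AUX i r x \<notin> sigs s" "ps \<subseteq> auxv (loc s i)" "finite ps" "is_valid n t r est ps" "est \<le> 1"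
    "proc_inv n t F (insert (AUX i r est) (sigs s)) i l'"
  shows "exec_inv n t F (send_bcast n k i r est ps (upd_loc s i l'))"
proof -
  let ?s = "send_bcast n k i r est ps (upd_loc s i l')"
  let ?SG = "insert (AUX i r est) (sigs s)"
  note inv = exec_invD[OF assms(1)]
  have "authentic n F (sigs s) (auxv (loc s i))"
    using inv(5)[OF assms(2,3)] unfolding proc_inv_def by blast
  then have auth_ps: "authentic n F (sigs s) ps" using assms(8) by (rule authentic_subset)
  have "\<forall>pk\<in>net (upd_loc s i l'). authentic_packet n F (sigs (upd_loc s i l')) pk"
    using inv(1) by simp
  then have packets: "\<forall>pk\<in>net ?s. authentic_packet n F (sigs ?s) pk"
    by (rule authentic_packets_send_bcast) (use auth_ps assms(2,3,11) in simp_all)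
  have signed: "signer m \<notin> F \<and> wf_signed n m" if "m \<in> sigs ?s" for m
    using that inv(2)[of m] assms(2,3,11) unfolding wf_signed_def by auto
  have sent: "reliably_sent n t F ?s j \<rho> x" if "AUX j \<rho> x \<in> sigs ?s" for j \<rho> x
  proof (cases "AUX j \<rho> x = AUX i r est")
    case True
    then show ?thesis
      using assms(6,9,10) authentic_mono[OF auth_ps subset_insertI] unfolding reliably_sent_def by auto
  next
    case False
    then have "AUX j \<rho> x \<in> sigs s" using that by auto
    show ?thesis
    proof (rule reliably_sent_mono[OF inv(3)[OF \<open>AUX j \<rho> x \<in> sigs s\<close>]])
      show "rd (loc s j) \<le> rd (loc ?s j)" using assms(5) by (cases "j = i") simp_all
      show "auxv (loc s d) \<subseteq> auxv (loc ?s d)" for d using assms(4) by (cases "d = i") simp_all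
    qed auto
  qed
  have unique: "x = y" if "AUX j \<rho> x \<in> sigs ?s" "AUX j \<rho> y \<in> sigs ?s" for j \<rho> x y
    using that inv(4)[of j \<rho> x y] assms(7) by auto
  have procs: "proc_inv n t F (sigs ?s) j (loc ?s j)" if "j < n" "j \<notin> F" for j
  proof (cases "j = i")
    case True
    then show ?thesis using assms(12) by simp
  next
    case False
    have "proc_inv n t F ?SG j (loc s j)"
      by (rule proc_inv_mono[OF inv(5)[OF that]]) (use False in auto)
    then show ?thesis using False by simp
  qed
  show ?thesis unfolding exec_inv_def using packets signed sent unique procs by blast
qed

lemma reliably_sent_receive:
  assumes "reliably_sent n t F s j \<rho> x"
  shows "reliably_sent n t F (s\<lparr>loc := (loc s)(pdst pk := receive n t pk (loc s (pdst pk))), net := net s - {pk}\<rparr>)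
           j \<rho> x"
proof -
  obtain tg src d m ps where pk: "pk = (tg, src, d, m, ps)" by (cases pk)
  have dst: "pdst pk = d" unfolding pk pdst_def by simp
  let ?s = "s\<lparr>loc := (loc s)(pdst pk := receive n t pk (loc s (pdst pk))), net := net s - {pk}\<rparr>"
  have auxv_mono: "auxv (loc s e) \<subseteq> auxv (loc ?s e)" for e
    by (cases "e = pdst pk") (simp_all add: receive_auxv_mono)
  have rd_eq: "rd (loc ?s j) = rd (loc s j)"
    by (cases "j = pdst pk") (simp_all add: receive_simps)
  obtain tg' ps' where ps': "finite ps'" "is_valid n t \<rho> x ps'" "authentic n F (sigs s) ps'"
    and dest: "\<forall>e<n. e \<notin> F \<longrightarrow> (tg', j, e, (AUX j \<rho> x, ps')) \<in> net s
                                   \<or> insert (AUX j \<rho> x) (needed \<rho> x ps') \<subseteq> auxv (loc s e)"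
    and \<rho>: "\<rho> \<le> rd (loc s j)"
    using assms unfolding reliably_sent_def by blast
  have "(tg', j, e, (AUX j \<rho> x, ps')) \<in> net ?s \<or> insert (AUX j \<rho> x) (needed \<rho> x ps') \<subseteq> auxv (loc ?s e)"
    if e: "e < n" "e \<notin> F" for e
  proof (cases "(tg', j, e, (AUX j \<rho> x, ps')) = pk")
    case True
    then have "e = d" "m = AUX j \<rho> x" "ps = ps'" unfolding pk by auto
    then have "auxv (loc ?s e) = auxv (loc s d) \<union> {m} \<union> needed (rnd m) (vl m) ps"
      using dst ps'(2) by (simp add: pk receive_simps)
    then show ?thesis using \<open>m = AUX j \<rho> x\<close> \<open>ps = ps'\<close> by auto
  next
    case False
    have "(tg', j, e, (AUX j \<rho> x, ps')) \<in> net s \<or> insert (AUX j \<rho> x) (needed \<rho> x ps') \<subseteq> auxv (loc s e)"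
      using dest e by blast
    then show ?thesis using False auxv_mono[of e] by auto
  qed
  then show ?thesis
    unfolding reliably_sent_def using ps' \<rho> rd_eq by (intro conjI exI[of _ tg'] exI[of _ ps']) auto
qed

lemma exec_inv_deliver:
  assumes "exec_inv n t F s" "pk \<in> net s"
  shows "exec_inv n t F (s\<lparr>loc := (loc s)(pdst pk := receive n t pk (loc s (pdst pk))), net := net s - {pk}\<rparr>)"
proof -
  obtain tg src d m ps where pk: "pk = (tg, src, d, m, ps)" by (cases pk)
  let ?s = "s\<lparr>loc := (loc s)(pdst pk := receive n t pk (loc s (pdst pk))), net := net s - {pk}\<rparr>"
  note inv = exec_invD[OF assms(1)]
  have auth: "authentic n F (sigs s) (insert m ps)"
    using inv(1)[OF assms(2)] unfolding pk authentic_packet_def by simp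
  have procs: "proc_inv n t F (sigs ?s) i (loc ?s i)" if "i < n" "i \<notin> F" for i
  proof (cases "i = pdst pk")
    case True
    then show ?thesis using proc_inv_receive[OF inv(5)[OF that] auth, of tg src d] pk by simp
  next
    case False
    then show ?thesis using inv(5)[OF that] by simp
  qed
  have "\<forall>p\<in>net ?s. authentic_packet n F (sigs ?s) p" using inv(1) by simp
  then show ?thesis unfolding exec_inv_def using inv(2,4) reliably_sent_receive[OF inv(3)] procs by simp
qed

lemma exec_inv_drop:
  assumes "exec_inv n t F s" "pdst pk \<in> F"
  shows "exec_inv n t F (s\<lparr>net := net s - {pk}\<rparr>)"
proof -
  have "reliably_sent n t F (s\<lparr>net := net s - {pk}\<rparr>) j \<rho> x" if sig: "AUX j \<rho> x \<in> sigs s" for j \<rho> x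
  proof -
    obtain tg ps where ps: "finite ps" "is_valid n t \<rho> x ps" "authentic n F (sigs s) ps"
      and dest: "\<forall>d<n. d \<notin> F \<longrightarrow> (tg, j, d, (AUX j \<rho> x, ps)) \<in> net s
                                     \<or> insert (AUX j \<rho> x) (needed \<rho> x ps) \<subseteq> auxv (loc s d)"
      and \<rho>: "\<rho> \<le> rd (loc s j)"
      using exec_invD(3)[OF assms(1) sig] unfolding reliably_sent_def by blast
    have "(tg, j, d, (AUX j \<rho> x, ps)) \<noteq> pk" if "d \<notin> F" for d
      using assms(2) that unfolding pdst_def by auto
    then show ?thesis
      using ps \<rho> dest unfolding reliably_sent_def by (intro conjI exI[of _ tg] exI[of _ ps]) auto
  qed
  then show ?thesis using assms(1) unfolding exec_inv_def by auto
qed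

lemma exec_inv_byz_send:
  assumes "exec_inv n t F s" "authentic n F (sigs s) (insert m ps)"
  shows "exec_inv n t F (s\<lparr>net := insert (tg, j, d, (m, ps)) (net s)\<rparr>)"
proof -
  note inv = exec_invD[OF assms(1)]
  have "reliably_sent n t F (s\<lparr>net := insert (tg, j, d, (m, ps)) (net s)\<rparr>) j' \<rho> x"
    if "AUX j' \<rho> x \<in> sigs s" for j' \<rho> x
    by (rule reliably_sent_mono[OF inv(3)[OF that]]) auto
  then show ?thesis using assms inv(1) unfolding exec_inv_def authentic_packet_def by auto
qed

lemma exec_inv_expire:
  assumes "exec_inv n t F s" "i < n" "i \<notin> F"
  shows "exec_inv n t F (upd_loc s i ((loc s i)\<lparr>tmr := (tmr (loc s i))(j := Expired)\<rparr>))"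
  by (rule exec_inv_upd_loc[OF assms(1) _ _ assms(2,3)])
    (use exec_invD(5)[OF assms] in \<open>auto simp: proc_inv_def\<close>)

lemma unsigned_future_round:
  assumes "exec_inv n t F s" "rd (loc s i) < r"
  shows "AUX i r x \<notin> sigs s"
  using exec_invD(3)[OF assms(1)] assms(2) unfolding reliably_sent_def by fastforce

lemma exec_inv_local_step:
  assumes "exec_inv n t F s" "i < n" "i \<notin> F" "local_step n t k i s s'"
  shows "exec_inv n t F s'"
  using assms(4)
proof (cases rule: local_step_cases)
  case (start_coord est ps)
  have "proc_inv n t F (insert (AUX i (Suc (rd (loc s i))) est) (sigs s)) i
     ((loc s i)\<lparr>rd := Suc (rd (loc s i)), tmr := start_timer (2 * Suc (rd (loc s i))) (tmr (loc s i)), pc := PWait1\<rparr>)"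
    by (rule proc_inv_start_round[OF exec_invD(5)[OF assms(1-3)] start_coord(1)]) (use start_coord(2) in auto)
  then show ?thesis
    unfolding start_coord(4) using bcast_okD[OF start_coord(3)] unsigned_future_round[OF assms(1)]
    by (intro exec_inv_send_bcast[OF assms(1-3)]) auto
next
  case start
  have "proc_inv n t F (sigs s) i
     ((loc s i)\<lparr>rd := Suc (rd (loc s i)), tmr := start_timer (2 * Suc (rd (loc s i))) (tmr (loc s i)), pc := PWait1\<rparr>)"
    by (rule proc_inv_start_round[OF exec_invD(5)[OF assms(1-3)] start(1)])
      (use start(2) unsigned_future_round[OF assms(1)] in auto)
  then show ?thesis
    unfolding start(3) by (intro exec_inv_upd_loc[OF assms(1) _ _ assms(2,3)]) auto
next
  case (wait1 est ps)
  have "\<forall>x. AUX i (rd (loc s i)) x \<notin> sigs s"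
    using exec_invD(5)[OF assms(1-3)] wait1(1,3) unfolding proc_inv_def by blast
  moreover have "proc_inv n t F (insert (AUX i (rd (loc s i)) est) (sigs s)) i ((loc s i)\<lparr>pc := PWait2\<rparr>)"
    by (rule proc_inv_wait1[OF exec_invD(5)[OF assms(1-3)] wait1(1)]) auto
  ultimately show ?thesis
    unfolding wait1(5) using bcast_okD[OF wait1(4)] by (intro exec_inv_send_bcast[OF assms(1-3)]) auto
next
  case wait1_coord
  have "\<exists>x. AUX i (rd (loc s i)) x \<in> sigs s"
    using exec_invD(5)[OF assms(1-3)] wait1_coord(3) unfolding proc_inv_def by blast
  then have "proc_inv n t F (sigs s) i ((loc s i)\<lparr>pc := PWait2\<rparr>)"
    by (intro proc_inv_wait1[OF exec_invD(5)[OF assms(1-3)] wait1_coord(1)]) auto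
  then show ?thesis
    unfolding wait1_coord(4) by (intro exec_inv_upd_loc[OF assms(1) _ _ assms(2,3)]) auto
next
  case wait2
  show ?thesis
    unfolding wait2(3) using wait2(1,2) by (intro exec_inv_upd_loc[OF assms(1) _ _ assms(2,3)] proc_inv_wait2[OF exec_invD(5)[OF assms(1-3)]]) auto
next
  case wait3
  show ?thesis
    unfolding wait3(3) using wait3(1) by (intro exec_inv_upd_loc[OF assms(1) _ _ assms(2,3)] proc_inv_wait3[OF exec_invD(5)[OF assms(1-3)]]) auto
qed

lemma exec_inv_step:
  assumes "exec_inv n t F s" "step n t F k a s s'"
  shows "exec_inv n t F s'"
proof (cases a)
  case (Local i)
  then show ?thesis using assms exec_inv_local_step unfolding step_def by auto
next
  case (Deliver pk)
  then show ?thesis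
    using assms exec_inv_deliver exec_inv_drop unfolding step_def by (auto split: if_splits)
next
  case (Expire i j)
  then show ?thesis using assms exec_inv_expire unfolding step_def by auto
next
  case (ByzSend j d m ps)
  then show ?thesis
    using assms exec_inv_byz_send unfolding step_def authentic_def by auto
next
  case Skip
  then show ?thesis using assms unfolding step_def by auto
qed

lemma exec_inv_init:
  assumes "\<forall>i<n. i \<notin> F \<longrightarrow> v i \<le> 1"
  shows "exec_inv n t F (init n F v)"
proof -
  have "reliably_sent n t F (init n F v) j \<rho> x" if "AUX j \<rho> x \<in> sigs (init n F v)" for j \<rho> x
  proof -
    have "\<rho> = 0" "x = v j" "j < n" "j \<notin> F" using that unfolding init_def by auto
    then show ?thesis
      unfolding reliably_sent_def
      by (intro conjI exI[of _ 0] exI[of _ "{}"]) (auto simp: init_def authentic_def is_valid_def)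
  qed
  then show ?thesis
    using assms unfolding exec_inv_def init_def proc_inv_def authentic_packet_def authentic_def wf_signed_def
    by auto
qed

text \<open>Round \<open>\<rho>\<close> occupies stages \<open>4\<rho> + 1 .. 4\<rho> + 4\<close>; every local step adds one.\<close>
definition stage :: "lstate \<Rightarrow> nat" where
  "stage l = 4 * rd l + (case pc l of PStart \<Rightarrow> 4 | PWait1 \<Rightarrow> 1 | PWait2 \<Rightarrow> 2 | PWait3 \<Rightarrow> 3)"

lemma stage_cases:
  "stage l = 4 * \<rho> + 4 \<Longrightarrow> rd l = \<rho> \<and> pc l = PStart"
  "stage l = 4 * \<rho> + 5 \<Longrightarrow> rd l = Suc \<rho> \<and> pc l = PWait1"
  "stage l = 4 * \<rho> + 6 \<Longrightarrow> rd l = Suc \<rho> \<and> pc l = PWait2"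
  "stage l = 4 * \<rho> + 7 \<Longrightarrow> rd l = Suc \<rho> \<and> pc l = PWait3"
  "4 * \<rho> + 2 \<le> stage l \<Longrightarrow> \<rho> < rd l \<or> (\<rho> = rd l \<and> pc l \<noteq> PWait1)"
  unfolding stage_def by (cases "pc l"; simp; presburger)+

lemma local_step_effect:
  assumes "local_step n t k i s s'"
  shows "stage (loc s' i) = Suc (stage (loc s i))" "auxv (loc s' i) = auxv (loc s i)"
    "j \<noteq> i \<Longrightarrow> loc s' j = loc s j" "sigs s \<subseteq> sigs s'" "net s \<subseteq> net s'"
    "tmr (loc s i) T = Expired \<Longrightarrow> tmr (loc s' i) T = Expired"
  using assms by (cases rule: local_step_cases; auto simp: stage_def start_timer_def)+

lemma step_cases:
  assumes "step n t F k a s s'"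
  obtains (local) i where "a = Local i" "local_step n t k i s s'"
  | (deliver) pk where "a = Deliver pk" "pdst pk \<notin> F"
      "s' = s\<lparr>loc := (loc s)(pdst pk := receive n t pk (loc s (pdst pk))), net := net s - {pk}\<rparr>"
  | (drop) pk where "a = Deliver pk" "s' = s\<lparr>net := net s - {pk}\<rparr>"
  | (expire) i T where "a = Expire i T" "s' = upd_loc s i ((loc s i)\<lparr>tmr := (tmr (loc s i))(T := Expired)\<rparr>)"
  | (byz_send) j d m ps where "a = ByzSend j d m ps" "s' = s\<lparr>net := insert (Suc k, j, d, (m, ps)) (net s)\<rparr>"
  | (skip) "a = Skip" "s' = s"
  using assms unfolding step_def by (cases a) (auto split: if_splits)

lemma step_sigs_mono:
  assumes "step n t F k a s s'"
  shows "sigs s \<subseteq> sigs s'"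
  using assms by (cases rule: step_cases) (auto dest: local_step_effect(4))

lemma step_auxv_mono:
  assumes "step n t F k a s s'"
  shows "auxv (loc s i) \<subseteq> auxv (loc s' i)"
  using assms
proof (cases rule: step_cases)
  case (local j)
  then show ?thesis using local_step_effect(2,3)[OF local(2)] by (cases "i = j") auto
next
  case (deliver pk)
  then show ?thesis using receive_auxv_mono by (cases "i = pdst pk") auto
qed auto

lemma step_expired:
  assumes "step n t F k a s s'" "tmr (loc s i) T = Expired"
  shows "tmr (loc s' i) T = Expired"
  using assms(1)
proof (cases rule: step_cases)
  case (local j)
  then show ?thesis using local_step_effect(3,6)[OF local(2)] assms(2) by (cases "i = j") auto
next
  case (deliver pk)
  then show ?thesis using receive_tmr(2) assms(2) by (cases "i = pdst pk") auto
qed (use assms(2) in auto)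

lemma step_stage:
  assumes "step n t F k a s s'"
  shows "stage (loc s' i) = (if a = Local i then Suc (stage (loc s i)) else stage (loc s i))"
  using assms
proof (cases rule: step_cases)
  case (local j)
  then show ?thesis using local_step_effect(1,3)[OF local(2)] by (cases "i = j") auto
next
  case (deliver pk)
  then show ?thesis by (cases "i = pdst pk") (auto simp: stage_def receive_simps)
qed (auto simp: stage_def)

lemma step_Local: "step n t F k a s s' \<Longrightarrow> a = Local i \<Longrightarrow> local_step n t k i s s'"
  unfolding step_def by auto

lemma step_removes_only_delivered:
  assumes "step n t F k a s s'" "pk \<in> net s" "pk \<notin> net s'"
  shows "a = Deliver pk"
  using assms(1) by (cases rule: step_cases) (use assms(2,3) in \<open>auto dest: local_step_effect(5)\<close>)

lemma bcast_ok_exists: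
  assumes "valid_vals n t r (auxv l) \<noteq> {}"
  shows "\<exists>est ps. bcast_ok n t r l est ps"
proof -
  let ?vals = "valid_vals n t r (auxv l)" and ?c = "r mod n" and ?bv = "(r + 1) mod 2"
  have "\<exists>est\<in>?vals. if \<exists>p\<in>?vals. (?c, AUX ?c r p) \<in> rcvd l then (?c, AUX ?c r est) \<in> rcvd l
                    else if ?bv \<in> ?vals then est = ?bv else est = 1 - ?bv"
  proof (cases "\<exists>p\<in>?vals. (?c, AUX ?c r p) \<in> rcvd l")
    case False
    obtain w where w: "w \<in> ?vals" using assms by blast
    then have "w \<le> 1" unfolding valid_vals_def by blast
    then have "w = ?bv \<or> w = 1 - ?bv" by (cases "w = ?bv") auto
    then show ?thesis using w False by auto
  qed auto
  then obtain est where est: "est \<in> ?vals"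
    "if \<exists>p\<in>?vals. (?c, AUX ?c r p) \<in> rcvd l then (?c, AUX ?c r est) \<in> rcvd l
     else if ?bv \<in> ?vals then est = ?bv else est = 1 - ?bv" by blast
  moreover obtain ps where "ps \<subseteq> auxv l" "finite ps" "is_valid n t r est ps"
    using est(1) unfolding valid_vals_def by blast
  ultimately have "bcast_ok n t r l est ps" unfolding bcast_ok_def Let_def by auto
  then show ?thesis by blast
qed

lemma local_step_enabled:
  fixes s :: gstate and i :: nat
  defines "l \<equiv> loc s i"
  assumes "pc l = PStart \<Longrightarrow> valid_vals n t (Suc (rd l)) (auxv l) \<noteq> {}"
    and "pc l = PWait1 \<Longrightarrow> tmr l (2 * rd l) = Expired \<and> valid_vals n t (rd l) (auxv l) \<noteq> {}"
    and "pc l = PWait2 \<Longrightarrow> n - t \<le> card (rsigners (auxv l) (rd l))"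
    and "pc l = PWait3 \<Longrightarrow> tmr l (2 * rd l + 1) = Expired"
  shows "\<exists>s'. local_step n t k i s s'"
proof (cases "pc l")
  case PStart
  show ?thesis
  proof (cases "i = Suc (rd l) mod n")
    case True
    obtain est ps where "bcast_ok n t (Suc (rd l)) l est ps"
      using assms(2) PStart bcast_ok_exists by blast
    then show ?thesis using PStart True[symmetric] unfolding local_step_def Let_def l_def by auto
  next
    case False
    then show ?thesis using PStart unfolding local_step_def Let_def l_def by auto
  qed
next
  case PWait1
  show ?thesis
  proof (cases "i = rd l mod n")
    case True
    then show ?thesis using PWait1 assms(3) unfolding local_step_def Let_def l_def by auto
  next
    case False
    obtain est ps where "bcast_ok n t (rd l) l est ps"
      using assms(3) PWait1 bcast_ok_exists by blast
    then show ?thesis using PWait1 False assms(3) unfolding local_step_def Let_def l_def by auto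
  qed
next
  case PWait2
  then show ?thesis using assms(4) unfolding local_step_def Let_def l_def by auto
next
  case PWait3
  then show ?thesis using assms(5) unfolding local_step_def Let_def l_def by auto
qed

lemma wait3_step_decided:
  assumes "local_step n t k i s s'" "pc (loc s i) = PWait3"
  defines "l \<equiv> loc s i"
  shows "decided (loc s' i) = (if n - t \<le> card (signers (auxv l) (rd l) (rd l mod 2)) \<and> decided l = None
                                then Some (rd l) else decided l)"
  using assms(1) by (cases rule: local_step_cases) (use assms(2) in \<open>auto simp: l_def\<close>)

locale execution =
  fixes n t :: nat and F :: "nat set" and v :: "nat \<Rightarrow> nat"
    and s :: "nat \<Rightarrow> gstate" and a :: "nat \<Rightarrow> action"
  assumes resilience: "3 * t < n" and faulty_subset: "F \<subseteq> {..<n}" and card_faulty: "card F \<le> t"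
    and proposals_binary: "\<forall>i<n. i \<notin> F \<longrightarrow> v i \<le> 1" and fair: "fair_execution n t F v s a"
begin

abbreviation correct :: "nat set" where
  "correct \<equiv> {..<n} - F"

lemma finite_faulty: "finite F"
  using faulty_subset finite_lessThan by (rule finite_subset)

lemma card_correct: "n - t \<le> card correct"
  using card_faulty faulty_subset by (simp add: card_Diff_subset finite_faulty)

lemma init_state: "s 0 = init n F v"
  using fair unfolding fair_execution_def by blast

lemma step_at: "step n t F k (a k) (s k) (s (Suc k))"
  using fair unfolding fair_execution_def by blast

lemma packet_eventually_delivered: "pk \<in> net (s k) \<Longrightarrow> pdst pk \<notin> F \<Longrightarrow> \<exists>k'\<ge>k. pk \<notin> net (s k')"
  using fair unfolding fair_execution_def by blast

lemma timer_eventually_expires: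
  "i \<in> correct \<Longrightarrow> tmr (loc (s k) i) T \<noteq> Idle \<Longrightarrow> \<exists>k'\<ge>k. tmr (loc (s k') i) T = Expired"
  using fair unfolding fair_execution_def by (cases "tmr (loc (s k) i) T") auto

lemma enabled_eventually_taken:
  "i \<in> correct \<Longrightarrow> local_step n t k i (s k) s' \<Longrightarrow> \<exists>k'\<ge>k. a k' = Local i"
  using fair unfolding fair_execution_def by blast

lemma invariant: "exec_inv n t F (s k)"
proof (induction k)
  case 0
  then show ?case using exec_inv_init[OF proposals_binary] init_state by simp
next
  case (Suc k)
  then show ?case using exec_inv_step step_at by blast
qed

lemma proc_inv_at: "i \<in> correct \<Longrightarrow> proc_inv n t F (sigs (s k)) i (loc (s k) i)"
  using exec_invD(5)[OF invariant] by blast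

lemma auxv_authentic: "i \<in> correct \<Longrightarrow> authentic n F (sigs (s k)) (auxv (loc (s k) i))"
  using proc_inv_at unfolding proc_inv_def by blast

lemma sigs_mono: "k \<le> k' \<Longrightarrow> sigs (s k) \<subseteq> sigs (s k')"
  by (induction rule: dec_induct) (use step_sigs_mono[OF step_at] in blast)+

lemma auxv_mono: "k \<le> k' \<Longrightarrow> auxv (loc (s k) i) \<subseteq> auxv (loc (s k') i)"
  by (induction rule: dec_induct) (use step_auxv_mono[OF step_at] in blast)+

lemma expired_mono: "k \<le> k' \<Longrightarrow> tmr (loc (s k) i) T = Expired \<Longrightarrow> tmr (loc (s k') i) T = Expired"
  by (induction rule: dec_induct) (use step_expired[OF step_at] in blast)+

lemma stage_Suc:
  "stage (loc (s (Suc k)) i) = (if a k = Local i then Suc (stage (loc (s k) i)) else stage (loc (s k) i))"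
  by (rule step_stage[OF step_at])

lemma stage_mono: "k \<le> k' \<Longrightarrow> stage (loc (s k) i) \<le> stage (loc (s k') i)"
  by (induction rule: dec_induct) (auto simp: stage_Suc le_SucI)

lemma stage_init: "stage (loc (s 0) i) = 4"
  using init_state unfolding init_def stage_def by simp

lemma eventually_received:
  assumes "AUX j \<rho> x \<in> sigs (s k)" "d \<in> correct"
  shows "\<exists>ps k'. is_valid n t \<rho> x ps \<and> finite ps \<and> insert (AUX j \<rho> x) (needed \<rho> x ps) \<subseteq> auxv (loc (s k') d)"
proof -
  obtain tg ps where ps: "finite ps" "is_valid n t \<rho> x ps"
    and dest: "(tg, j, d, (AUX j \<rho> x, ps)) \<in> net (s k) \<or> insert (AUX j \<rho> x) (needed \<rho> x ps) \<subseteq> auxv (loc (s k) d)"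
    using exec_invD(3)[OF invariant assms(1)] assms(2) unfolding reliably_sent_def by blast
  let ?pk = "(tg, j, d, (AUX j \<rho> x, ps))"
  let ?received = "\<lambda>k. insert (AUX j \<rho> x) (needed \<rho> x ps) \<subseteq> auxv (loc (s k) d)"
  have in_transit: "?pk \<in> net (s k') \<or> ?received k'" if "k \<le> k'" for k'
    using that
  proof (induction rule: dec_induct)
    case (step m)
    show ?case
    proof (cases "?received m")
      case True
      then show ?thesis using auxv_mono[of m "Suc m" d] by auto
    next
      case False
      then have pk: "?pk \<in> net (s m)" using step.IH by blast
      show ?thesis
      proof (cases "?pk \<in> net (s (Suc m))")
        case False
        then have "a m = Deliver ?pk" using step_removes_only_delivered[OF step_at pk] by blast
        then have "loc (s (Suc m)) d = receive n t ?pk (loc (s m) d)"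
          using step_at[of m] assms(2) unfolding step_def pdst_def by auto
        then show ?thesis using ps(2) by (auto simp: receive_simps)
      qed simp
    qed
  qed (use dest in blast)
  show ?thesis
  proof (cases "?pk \<in> net (s k)")
    case True
    then obtain k' where "k \<le> k'" "?pk \<notin> net (s k')"
      using packet_eventually_delivered assms(2) unfolding pdst_def by fastforce
    then show ?thesis using in_transit ps by blast
  next
    case False
    then show ?thesis using dest ps by blast
  qed
qed

lemma stage_advances:
  assumes "i \<in> correct" "P \<le> stage (loc (s k) i)"
    and "stage (loc (s k) i) = P \<Longrightarrow> \<exists>s'. local_step n t k i (s k) s'"
  shows "\<exists>k'. P < stage (loc (s k') i)"
proof (cases "stage (loc (s k) i) = P")
  case True
  then obtain k' where "k \<le> k'" "a k' = Local i" using assms(1,3) enabled_eventually_taken by blast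
  then have "P < stage (loc (s (Suc k')) i)" using stage_mono[of k k' i] True by (simp add: stage_Suc)
  then show ?thesis by blast
next
  case False
  then show ?thesis using assms(2) by (intro exI[of _ k]) simp
qed

definition all_reach :: "nat \<Rightarrow> bool" where
  "all_reach P \<longleftrightarrow> (\<forall>j\<in>correct. \<exists>k. P \<le> stage (loc (s k) j))"

lemma all_reach_mono: "all_reach P \<Longrightarrow> Q \<le> P \<Longrightarrow> all_reach Q"
  unfolding all_reach_def using le_trans by blast

lemma signed_of_stage:
  assumes "i \<in> correct" "4 * \<rho> + 2 \<le> stage (loc (s k) i)"
  shows "\<exists>x. AUX i \<rho> x \<in> sigs (s k)"
  using stage_cases(5)[OF assms(2)] proc_inv_at[OF assms(1), of k] unfolding proc_inv_def by auto

lemma eventually_received_round: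
  assumes "all_reach (4 * \<rho> + 2)" "i \<in> correct" "j \<in> correct"
  shows "\<exists>x ps. x \<le> 1 \<and> finite ps \<and> is_valid n t \<rho> x ps
           \<and> (\<exists>k. insert (AUX j \<rho> x) (needed \<rho> x ps) \<subseteq> auxv (loc (s k) i))"
proof -
  obtain k x where sig: "AUX j \<rho> x \<in> sigs (s k)"
    using assms(1,3) signed_of_stage unfolding all_reach_def by blast
  then have "x \<le> 1" using exec_invD(2)[OF invariant sig] unfolding wf_signed_def by simp
  then show ?thesis using eventually_received[OF sig assms(2)] by blast
qed

lemma eventually_valid_value:
  assumes "all_reach (4 * \<rho> + 2)" "i \<in> correct"
  shows "\<exists>K. valid_vals n t (Suc \<rho>) (auxv (loc (s K) i)) \<noteq> {}"
proof -
  have "\<exists>x. \<forall>j\<in>correct. \<exists>ps. x j \<le> 1 \<and> finite ps \<and> is_valid n t \<rho> (x j) ps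
          \<and> (\<exists>k. insert (AUX j \<rho> (x j)) (needed \<rho> (x j) ps) \<subseteq> auxv (loc (s k) i))"
    using eventually_received_round[OF assms] by (intro bchoice) blast
  then obtain x where "\<forall>j\<in>correct. \<exists>ps. x j \<le> 1 \<and> finite ps \<and> is_valid n t \<rho> (x j) ps
          \<and> (\<exists>k. insert (AUX j \<rho> (x j)) (needed \<rho> (x j) ps) \<subseteq> auxv (loc (s k) i))"
    by blast
  then have "\<exists>ps. \<forall>j\<in>correct. x j \<le> 1 \<and> finite (ps j) \<and> is_valid n t \<rho> (x j) (ps j)
          \<and> (\<exists>k. insert (AUX j \<rho> (x j)) (needed \<rho> (x j) (ps j)) \<subseteq> auxv (loc (s k) i))"
    by (rule bchoice)
  then obtain ps where sent: "\<forall>j\<in>correct. x j \<le> 1 \<and> finite (ps j) \<and> is_valid n t \<rho> (x j) (ps j)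
          \<and> (\<exists>k. insert (AUX j \<rho> (x j)) (needed \<rho> (x j) (ps j)) \<subseteq> auxv (loc (s k) i))"
    by blast
  have "\<exists>K. \<forall>j\<in>correct. insert (AUX j \<rho> (x j)) (needed \<rho> (x j) (ps j)) \<subseteq> auxv (loc (s K) i)"
  proof (rule finite_eventually_all)
    show "\<forall>j\<in>correct. \<exists>k. insert (AUX j \<rho> (x j)) (needed \<rho> (x j) (ps j)) \<subseteq> auxv (loc (s k) i)"
      using sent by blast
  next
    fix j k k'
    assume "insert (AUX j \<rho> (x j)) (needed \<rho> (x j) (ps j)) \<subseteq> auxv (loc (s k) i)" "k \<le> k'"
    then show "insert (AUX j \<rho> (x j)) (needed \<rho> (x j) (ps j)) \<subseteq> auxv (loc (s k') i)"
      using auxv_mono by blast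
  qed simp
  then obtain K where "\<forall>j\<in>correct. insert (AUX j \<rho> (x j)) (needed \<rho> (x j) (ps j)) \<subseteq> auxv (loc (s K) i)"
    by blast
  then have "valid_vals n t (Suc \<rho>) (auxv (loc (s K) i)) \<noteq> {}"
    using sent by (intro valid_vals_Suc_nonempty[OF resilience _ card_correct, where x = x and ps = ps]) auto
  then show ?thesis by blast
qed

lemma eventually_round_quorum:
  assumes "all_reach (4 * \<rho> + 2)" "i \<in> correct"
  shows "\<exists>K. n - t \<le> card (rsigners (auxv (loc (s K) i)) \<rho>)"
proof -
  have "\<forall>j\<in>correct. \<exists>k. j \<in> rsigners (auxv (loc (s k) i)) \<rho>"
  proof
    fix j assume "j \<in> correct"
    then obtain k x where "AUX j \<rho> x \<in> sigs (s k)"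
      using assms(1) signed_of_stage unfolding all_reach_def by blast
    then show "\<exists>k. j \<in> rsigners (auxv (loc (s k) i)) \<rho>"
      using eventually_received[OF _ assms(2)] unfolding rsigners_def by blast
  qed
  moreover have "j \<in> rsigners (auxv (loc (s k') i)) \<rho>"
    if "j \<in> rsigners (auxv (loc (s k) i)) \<rho>" "k \<le> k'" for j k k'
    using that auxv_mono[OF that(2), of i] unfolding rsigners_def by blast
  ultimately have "\<exists>K. \<forall>j\<in>correct. j \<in> rsigners (auxv (loc (s K) i)) \<rho>"
    by (intro finite_eventually_all) auto
  then obtain K where "correct \<subseteq> rsigners (auxv (loc (s K) i)) \<rho>"
    by blast
  then have "card correct \<le> card (rsigners (auxv (loc (s K) i)) \<rho>)"
    using finite_rsigners[OF auxv_authentic[OF assms(2)]] by (rule card_mono[rotated])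
  then have "n - t \<le> card (rsigners (auxv (loc (s K) i)) \<rho>)" using card_correct by linarith
  then show ?thesis by blast
qed

lemma start_stage_passed:
  assumes "all_reach (4 * \<rho> + 4)"
  shows "all_reach (4 * \<rho> + 5)"
  unfolding all_reach_def
proof
  fix i assume i: "i \<in> correct"
  obtain k where k: "4 * \<rho> + 4 \<le> stage (loc (s k) i)" using assms i unfolding all_reach_def by blast
  obtain K where K: "valid_vals n t (Suc \<rho>) (auxv (loc (s K) i)) \<noteq> {}"
    using eventually_valid_value[OF all_reach_mono[OF assms, of "4 * \<rho> + 2"] i] by auto
  let ?m = "max k K"
  have "\<exists>k. 4 * \<rho> + 4 < stage (loc (s k) i)"
  proof (rule stage_advances[OF i])
    show "4 * \<rho> + 4 \<le> stage (loc (s ?m) i)" using k stage_mono[of k ?m i] by simp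
    assume "stage (loc (s ?m) i) = 4 * \<rho> + 4"
    moreover have "valid_vals n t (Suc \<rho>) (auxv (loc (s ?m) i)) \<noteq> {}"
      using K valid_vals_mono[OF auxv_mono[of K ?m i]] by fastforce
    ultimately show "\<exists>s'. local_step n t ?m i (s ?m) s'"
      using stage_cases(1) by (intro local_step_enabled) auto
  qed
  then obtain k' where "4 * \<rho> + 4 < stage (loc (s k') i)" by blast
  then show "\<exists>k. 4 * \<rho> + 5 \<le> stage (loc (s k) i)" by (intro exI[of _ k']) simp
qed

lemma wait1_stage_passed:
  assumes "all_reach (4 * \<rho> + 5)"
  shows "all_reach (4 * \<rho> + 6)"
  unfolding all_reach_def
proof
  fix i assume i: "i \<in> correct"
  obtain k where k: "4 * \<rho> + 5 \<le> stage (loc (s k) i)" using assms i unfolding all_reach_def by blast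
  show "\<exists>k. 4 * \<rho> + 6 \<le> stage (loc (s k) i)"
  proof (cases "stage (loc (s k) i) = 4 * \<rho> + 5")
    case True
    then have "tmr (loc (s k) i) (2 * Suc \<rho>) \<noteq> Idle"
      using stage_cases(2) proc_inv_at[OF i, of k] unfolding proc_inv_def by auto
    then obtain k1 where k1: "k \<le> k1" "tmr (loc (s k1) i) (2 * Suc \<rho>) = Expired"
      using timer_eventually_expires[OF i] by blast
    obtain K where K: "valid_vals n t (Suc \<rho>) (auxv (loc (s K) i)) \<noteq> {}"
      using eventually_valid_value[OF all_reach_mono[OF assms, of "4 * \<rho> + 2"] i] by auto
    let ?m = "max k1 K"
    have "\<exists>k. 4 * \<rho> + 5 < stage (loc (s k) i)"
    proof (rule stage_advances[OF i])
      show "4 * \<rho> + 5 \<le> stage (loc (s ?m) i)" using True k1(1) stage_mono[of k ?m i] by simp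
      assume "stage (loc (s ?m) i) = 4 * \<rho> + 5"
      moreover have "tmr (loc (s ?m) i) (2 * Suc \<rho>) = Expired" using expired_mono[OF _ k1(2)] by simp
      moreover have "valid_vals n t (Suc \<rho>) (auxv (loc (s ?m) i)) \<noteq> {}"
        using K valid_vals_mono[OF auxv_mono[of K ?m i]] by fastforce
      ultimately show "\<exists>s'. local_step n t ?m i (s ?m) s'"
        using stage_cases(2) by (intro local_step_enabled) auto
    qed
    then obtain k' where "4 * \<rho> + 5 < stage (loc (s k') i)" by blast
    then show ?thesis by (intro exI[of _ k']) simp
  next
    case False
    then show ?thesis using k by (intro exI[of _ k]) simp
  qed
qed

lemma wait2_stage_passed:
  assumes "all_reach (4 * \<rho> + 6)"
  shows "all_reach (4 * \<rho> + 7)"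
  unfolding all_reach_def
proof
  fix i assume i: "i \<in> correct"
  obtain k where k: "4 * \<rho> + 6 \<le> stage (loc (s k) i)" using assms i unfolding all_reach_def by blast
  obtain K where K: "n - t \<le> card (rsigners (auxv (loc (s K) i)) (Suc \<rho>))"
    using eventually_round_quorum[OF all_reach_mono[OF assms, of "4 * Suc \<rho> + 2"] i] by auto
  let ?m = "max k K"
  have "\<exists>k. 4 * \<rho> + 6 < stage (loc (s k) i)"
  proof (rule stage_advances[OF i])
    show "4 * \<rho> + 6 \<le> stage (loc (s ?m) i)" using k stage_mono[of k ?m i] by simp
    assume "stage (loc (s ?m) i) = 4 * \<rho> + 6"
    moreover have "n - t \<le> card (rsigners (auxv (loc (s ?m) i)) (Suc \<rho>))"
      by (rule le_trans[OF K card_rsigners_mono[OF auxv_authentic[OF i] auxv_mono]]) simp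
    ultimately show "\<exists>s'. local_step n t ?m i (s ?m) s'"
      using stage_cases(3) by (intro local_step_enabled) auto
  qed
  then obtain k' where "4 * \<rho> + 6 < stage (loc (s k') i)" by blast
  then show "\<exists>k. 4 * \<rho> + 7 \<le> stage (loc (s k) i)" by (intro exI[of _ k']) simp
qed

lemma wait3_stage_passed:
  assumes "all_reach (4 * \<rho> + 7)"
  shows "all_reach (4 * Suc \<rho> + 4)"
  unfolding all_reach_def
proof
  fix i assume i: "i \<in> correct"
  obtain k where k: "4 * \<rho> + 7 \<le> stage (loc (s k) i)" using assms i unfolding all_reach_def by blast
  show "\<exists>k. 4 * Suc \<rho> + 4 \<le> stage (loc (s k) i)"
  proof (cases "stage (loc (s k) i) = 4 * \<rho> + 7")
    case True
    then have "tmr (loc (s k) i) (2 * Suc \<rho> + 1) \<noteq> Idle"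
      using stage_cases(4) proc_inv_at[OF i, of k] unfolding proc_inv_def by auto
    then obtain k1 where k1: "k \<le> k1" "tmr (loc (s k1) i) (2 * Suc \<rho> + 1) = Expired"
      using timer_eventually_expires[OF i] by blast
    have "\<exists>k. 4 * \<rho> + 7 < stage (loc (s k) i)"
    proof (rule stage_advances[OF i])
      show "4 * \<rho> + 7 \<le> stage (loc (s k1) i)" using True stage_mono[OF k1(1), of i] by simp
      assume "stage (loc (s k1) i) = 4 * \<rho> + 7"
      then show "\<exists>s'. local_step n t k1 i (s k1) s'"
        using stage_cases(4) k1(2) by (intro local_step_enabled) auto
    qed
    then obtain k' where "4 * \<rho> + 7 < stage (loc (s k') i)" by blast
    then show ?thesis by (intro exI[of _ k']) simp
  next
    case False
    then show ?thesis using k by (intro exI[of _ k]) simp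
  qed
qed

lemma all_reach_round: "all_reach (4 * \<rho> + 4)"
proof (induction \<rho>)
  case 0
  show ?case unfolding all_reach_def using stage_init by (intro ballI exI[of _ 0]) simp
next
  case (Suc \<rho>)
  then show ?case
    using start_stage_passed wait1_stage_passed wait2_stage_passed wait3_stage_passed by simp
qed

lemma stage_eventually_left:
  assumes "i \<in> correct" "4 \<le> P"
  shows "\<exists>k. stage (loc (s k) i) = P \<and> a k = Local i"
proof -
  obtain k where "4 * P + 4 \<le> stage (loc (s k) i)"
    using all_reach_round assms(1) unfolding all_reach_def by blast
  then have "P < stage (loc (s k) i)" by simp
  moreover have "stage (loc (s 0) i) \<le> P" using stage_init assms(2) by simp
  ultimately obtain j where j: "stage (loc (s j) i) \<le> P" "P < stage (loc (s (Suc j)) i)"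
    using nat_crossing[of "\<lambda>k. stage (loc (s k) i)"] by blast
  then have "a j = Local i" using stage_Suc[of j i] by (auto split: if_splits)
  then show ?thesis using j stage_Suc[of j i] by (intro exI[of _ j]) auto
qed

definition signed_ever :: "signed set" where
  "signed_ever = (\<Union>k. sigs (s k))"

lemma authentic_signed_ever: "authentic n F (sigs (s k)) X \<Longrightarrow> authentic n F signed_ever X"
  unfolding signed_ever_def by (erule authentic_mono) auto

lemma signed_ever_unique:
  assumes "AUX j \<rho> x \<in> signed_ever" "AUX j \<rho> y \<in> signed_ever"
  shows "x = y"
proof -
  obtain k1 k2 where "AUX j \<rho> x \<in> sigs (s k1)" "AUX j \<rho> y \<in> sigs (s k2)"
    using assms unfolding signed_ever_def by blast
  then have "AUX j \<rho> x \<in> sigs (s (max k1 k2))" "AUX j \<rho> y \<in> sigs (s (max k1 k2))"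
    using sigs_mono[of k1 "max k1 k2"] sigs_mono[of k2 "max k1 k2"] by auto
  then show ?thesis using exec_invD(4)[OF invariant] by blast
qed

lemma signed_ever_valid:
  assumes "AUX j \<rho> x \<in> signed_ever"
  shows "\<exists>ps. is_valid n t \<rho> x ps \<and> authentic n F signed_ever ps"
proof -
  obtain k where "AUX j \<rho> x \<in> sigs (s k)" using assms unfolding signed_ever_def by blast
  then obtain ps where "is_valid n t \<rho> x ps" "authentic n F (sigs (s k)) ps"
    using exec_invD(3)[OF invariant] unfolding reliably_sent_def by blast
  then show ?thesis using authentic_signed_ever by blast
qed

lemma auxv_authentic_ever: "i \<in> correct \<Longrightarrow> authentic n F signed_ever (auxv (loc (s k) i))"
  using auxv_authentic authentic_signed_ever by blast

lemma auxv_justified: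
  assumes "i \<in> correct" "m \<in> auxv (loc (s k) i)"
  shows "\<exists>j \<rho> x ps. is_valid n t \<rho> x ps \<and> authentic n F signed_ever ps \<and> m \<in> insert (AUX j \<rho> x) (needed \<rho> x ps)"
proof -
  have "justified n t F (sigs (s k)) m" using proc_inv_at[OF assms(1), of k] assms(2) unfolding proc_inv_def by blast
  then show ?thesis using authentic_signed_ever unfolding justified_def by blast
qed

end

locale decision = execution +
  fixes r p k0 :: nat
  assumes p_correct: "p \<in> correct" and p_decided: "decided (loc (s k0) p) = Some r"
begin

text \<open>The value decided in round \<open>r\<close>.\<close>
abbreviation b :: nat where
  "b \<equiv> r mod 2"

lemma decision_round_pos: "1 \<le> r"
  using proc_inv_at[OF p_correct, of k0] p_decided unfolding proc_inv_def by auto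

lemma decision_quorum: "n - t \<le> card (signers (auxv (loc (s k0) p)) r b)"
  using proc_inv_at[OF p_correct, of k0] p_decided unfolding proc_inv_def by auto

lemma no_quorum_against:
  assumes "authentic n F signed_ever X"
  shows "card (signers X r (1 - b)) < n - t"
proof (rule ccontr)
  assume "\<not> ?thesis"
  then have "n - t \<le> card (signers X r (1 - b))" by simp
  then obtain j where "j \<in> signers (auxv (loc (s k0) p)) r b \<inter> signers X r (1 - b)" "j \<notin> F"
    using quorums_intersect_outside[OF resilience finite_faulty card_faulty
        signers_subset_lessThan[OF auxv_authentic_ever[OF p_correct, of k0]] signers_subset_lessThan[OF assms]
        decision_quorum]
    by blast
  then have "AUX j r b \<in> signed_ever" "AUX j r (1 - b) \<in> signed_ever"
    using auxv_authentic_ever[OF p_correct, of k0] assms unfolding authentic_def signers_def by auto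
  then have "b = 1 - b" by (rule signed_ever_unique)
  then show False by presburger
qed

lemma no_valid_flip:
  assumes "\<rho> = Suc r \<or> \<rho> = Suc (Suc r)" "is_valid n t \<rho> (1 - b) ps" "authentic n F signed_ever ps"
  shows False
proof -
  have par: "Suc r mod 2 = 1 - b" "1 - b \<noteq> b" by presburger+
  from assms(1) have "n - t \<le> card (signers ps r (1 - b))"
  proof
    assume "\<rho> = Suc r"
    then show ?thesis using assms(2) decision_round_pos par(2) by (simp add: is_valid_def Let_def)
  next
    assume "\<rho> = Suc (Suc r)"
    then show ?thesis using assms(2) decision_round_pos par(1) by (simp add: is_valid_def Let_def)
  qed
  then show False using no_quorum_against[OF assms(3)] by simp
qed

lemma no_quorum_flip:
  assumes "authentic n F signed_ever X" "\<rho> = Suc r \<or> \<rho> = Suc (Suc r)"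
  shows "card (signers X \<rho> (1 - b)) < n - t"
proof (rule ccontr)
  assume "\<not> ?thesis"
  then have "n - t \<le> card (signers X \<rho> (1 - b))" by simp
  then obtain j where "j \<in> signers X \<rho> (1 - b)" "j \<notin> F"
    using quorum_member_outside[OF resilience finite_faulty card_faulty] by blast
  then have "AUX j \<rho> (1 - b) \<in> signed_ever" using assms(1) unfolding authentic_def signers_def by auto
  then show False using signed_ever_valid no_valid_flip assms(2) by blast
qed

lemma value_in_round_Suc_Suc:
  assumes "i \<in> correct" "m \<in> auxv (loc (s k) i)" "rnd m = Suc (Suc r)"
  shows "vl m = b"
proof (rule ccontr)
  assume "vl m \<noteq> b"
  moreover have "vl m \<le> 1"
    using auxv_authentic_ever[OF assms(1)] assms(2) unfolding authentic_def wf_signed_def by blast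
  ultimately have flip: "vl m = 1 - b" by presburger
  obtain j \<rho> x ps where valid: "is_valid n t \<rho> x ps" "authentic n F signed_ever ps"
    and m: "m \<in> insert (AUX j \<rho> x) (needed \<rho> x ps)"
    using auxv_justified[OF assms(1,2)] by blast
  show False
  proof (cases "m = AUX j \<rho> x")
    case True
    then show False using no_valid_flip valid assms(3) flip by auto
  next
    case False
    then have "m \<in> needed \<rho> x ps" using m by blast
    then have "n - t \<le> card (signers ps (Suc (Suc r)) (1 - b))"
      using needed_quorum[OF valid(1) _ \<open>vl m \<le> 1\<close>] assms(3) flip by simp
    then show False using no_quorum_flip[OF valid(2)] by fastforce
  qed
qed

lemma no_decision_in_round_Suc:
  assumes "i \<in> correct"
  shows "decided (loc (s k) i) \<noteq> Some (Suc r)"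
proof
  assume "decided (loc (s k) i) = Some (Suc r)"
  then have "n - t \<le> card (signers (auxv (loc (s k) i)) (Suc r) (Suc r mod 2))"
    using proc_inv_at[OF assms, of k] unfolding proc_inv_def by blast
  moreover have "Suc r mod 2 = 1 - b" by presburger
  ultimately have "n - t \<le> card (signers (auxv (loc (s k) i)) (Suc r) (1 - b))" by simp
  then show False using no_quorum_flip[OF auxv_authentic_ever[OF assms, of k], of "Suc r"] by simp
qed

lemma quorum_in_round_Suc_Suc:
  assumes "i \<in> correct" "rd (loc (s k) i) = Suc (Suc r)" "pc (loc (s k) i) = PWait3"
  shows "n - t \<le> card (signers (auxv (loc (s k) i)) (Suc (Suc r)) b)"
proof -
  let ?A = "auxv (loc (s k) i)"
  have "rsigners ?A (Suc (Suc r)) \<subseteq> signers ?A (Suc (Suc r)) b"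
    using value_in_round_Suc_Suc[OF assms(1)] unfolding rsigners_def signers_def by fastforce
  then have "card (rsigners ?A (Suc (Suc r))) \<le> card (signers ?A (Suc (Suc r)) b)"
    by (rule card_mono[OF finite_signers[OF auxv_authentic[OF assms(1)]]])
  moreover have "n - t \<le> card (rsigners ?A (Suc (Suc r)))"
    using proc_inv_at[OF assms(1), of k] assms(2,3) unfolding proc_inv_def by auto
  ultimately show ?thesis by linarith
qed

lemma decides_in_round_r_or_Suc_Suc:
  assumes "i \<in> correct" and minimal: "\<forall>i k r'. i < n \<and> i \<notin> F \<and> decided (loc (s k) i) = Some r' \<longrightarrow> r \<le> r'"
  shows "\<exists>k. decided (loc (s k) i) = Some r \<or> decided (loc (s k) i) = Some (r + 2)"
proof -
  obtain k where k: "stage (loc (s k) i) = 4 * Suc r + 7" "a k = Local i"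
    using stage_eventually_left[OF assms(1), of "4 * Suc r + 7"] by auto
  let ?l = "loc (s k) i"
  have l: "rd ?l = Suc (Suc r)" "pc ?l = PWait3" using stage_cases(4)[OF k(1)] by auto
  have "decided (loc (s (Suc k)) i) = (if n - t \<le> card (signers (auxv ?l) (rd ?l) (rd ?l mod 2)) \<and> decided ?l = None
                                        then Some (rd ?l) else decided ?l)"
    using wait3_step_decided[OF step_Local[OF step_at k(2)] l(2)] .
  also have "\<dots> = (if decided ?l = None then Some (r + 2) else decided ?l)"
    using quorum_in_round_Suc_Suc[OF assms(1) l] l(1) by simp
  finally have decided: "decided (loc (s (Suc k)) i) = (if decided ?l = None then Some (r + 2) else decided ?l)" .
  show ?thesis
  proof (cases "decided ?l")
    case None
    then show ?thesis using decided by auto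
  next
    case (Some \<rho>)
    then have "\<rho> \<le> Suc (Suc r)" using proc_inv_at[OF assms(1), of k] l(1) unfolding proc_inv_def by auto
    moreover have "r \<le> \<rho>" using minimal assms(1) Some by blast
    moreover have "\<rho> \<noteq> Suc r" using no_decision_in_round_Suc[OF assms(1)] Some by blast
    ultimately have "\<rho> = r \<or> \<rho> = r + 2" by linarith
    then show ?thesis using decided Some by auto
  qed
qed

end

theorem lemma5:
  fixes n t :: nat and F :: "nat set" and v :: "nat \<Rightarrow> nat"
    and s :: "nat \<Rightarrow> gstate" and a :: "nat \<Rightarrow> action" and r :: nat
  assumes "3 * t < n"
    and "F \<subseteq> {..<n}" and "card F \<le> t"
    and "\<forall>i<n. i \<notin> F \<longrightarrow> v i \<le> 1"
    and "fair_execution n t F v s a"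
    and "\<exists>i k. i < n \<and> i \<notin> F \<and> decided (loc (s k) i) = Some r"
    and "\<forall>i k r'. i < n \<and> i \<notin> F \<and> decided (loc (s k) i) = Some r' \<longrightarrow> r \<le> r'"
  shows "\<forall>i<n. i \<notin> F \<longrightarrow>
           (\<exists>k. decided (loc (s k) i) = Some r \<or> decided (loc (s k) i) = Some (r + 2))"
proof -
  obtain p k0 where "p < n" "p \<notin> F" "decided (loc (s k0) p) = Some r" using assms(6) by blast
  then interpret decision n t F v s a r p k0 by unfold_locales (use assms in auto)
  show ?thesis using decides_in_round_r_or_Suc_Suc assms(7) by blast
qed

end
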